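(* Let $R$ be a commutative ring with unit and $\mathcal{A}_0$ the free $R$-module with basis the set of homotopy classes of homotopically non-trivial virtual strings. The $R$-linear map $\nu:\mathcal{A}_0\to\mathcal{A}_0\otimes\mathcal{A}_0$ given on generators by $\nu(\langle\alpha\rangle)=\sum_{e\in\operatorname{arr}(\alpha)}\big(\langle\alpha^1_e\rangle\otimes\langle\alpha^2_e\rangle-\langle\alpha^2_e\rangle\otimes\langle\alpha^1_e\rangle\big)$ is a well-defined Lie cobracket, and the Lie coalgebra $(\mathcal{A}_0,\nu)$ is spiral.
   Context: A virtual string $\alpha$ is an oriented circle $S$ with $2m$ distinct points partitioned into $m$ ordered pairs $(a,b)$ (arrows); for distinct $a,b$, $ab$ is the arc from $a$ to $b$ in the positive direction. Homotopy of strings is generated by homeomorphisms and the moves: (a) add $(a,b)$ with $ab$ free of endpoints; (b) for two disjoint endpoint-free arcs with endpoints $a,a'$ and $b,b'$ (any orders), add $(a,b)$ and $(b',a')$; (c) replace arrows $(a^+,b),(b^+,c),(c^+,a)$, where $aa^+,bb^+,cc^+$ are disjoint endpoint-free arcs, by $(a,b^+),(b,c^+),(c,a^+)$; and inverses. A string is homotopically trivial if homotopic to a string with no arrows. $\langle\alpha\rangle$ is the class of $\alpha$ in $\mathcal{A}_0$ if $\alpha$ is homotopically non-trivial and $0$ otherwise. For $e=(a,b)\in\operatorname{arr}(\alpha)$, $\alpha^1_e$ (resp. $\alpha^2_e$) is obtained from $\alpha$ by removing all arrows except those with both endpoints in the interior of $ab$ (resp. of $ba$). A Lie cobracket on an $R$-module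 $A$ is an $R$-linear $\nu:A\to A\otimes A$ with $P\circ\nu=-\nu$ ($P(x\otimes y)=y\otimes x$) and $(\mathrm{id}+\tau+\tau^2)\circ(\mathrm{id}\otimes\nu)\circ\nu=0$, where $\tau(x\otimes y\otimes z)=z\otimes x\otimes y$. $(A,\nu)$ is spiral if $A$ is free and $A=\bigcup_{n\ge1}\ker\nu^{(n)}$, where $\nu^{(n)}=(\mathrm{id}^{\otimes(n-1)}\otimes\nu)\circ\cdots\circ(\mathrm{id}\otimes\nu)\circ\nu$. *)

theory Defs
  imports Main
begin

text \<open>A virtual string with m arrows is encoded by a word of length 2m listing the
  2m distinguished points of the oriented circle in positive cyclic order, starting
  at an arbitrary point.  The letter (e, True) is the tail (first point) of arrow e,
  the letter (e, False) its head (second point).  Arrow names are irrelevant, and so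
  is the starting point: both are absorbed by the homotopy relation (renaming and
  rotation are orientation-preserving homeomorphisms).\<close>

type_synonym vword = "(nat \<times> bool) list"

definition vstring :: "vword \<Rightarrow> bool" where
  "vstring w \<longleftrightarrow> distinct w \<and> (\<forall>e b. (e, b) \<in> set w \<longrightarrow> (e, \<not> b) \<in> set w)"

definition arr :: "vword \<Rightarrow> nat set" where
  "arr w = {e. (e, True) \<in> set w}"

definition pos :: "vword \<Rightarrow> nat \<times> bool \<Rightarrow> nat" where
  "pos w x = (THE i. i < length w \<and> w ! i = x)"

definition in_arc :: "nat \<Rightarrow> nat \<Rightarrow> nat \<Rightarrow> bool" where
  "in_arc p q k \<longleftrightarrow> (if p < q then p < k \<and> k < q else p < k \<or> k < q)"

definition keep_arc :: "vword \<Rightarrow> nat \<Rightarrow> nat \<Rightarrow> vword" where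
  "keep_arc w p q = filter (\<lambda>(f, b). in_arc p q (pos w (f, True)) \<and> in_arc p q (pos w (f, False))) w"

text \<open>For e = (a,b): sub1 = alpha^1_e (arrows inside ab), sub2 = alpha^2_e (inside ba).\<close>
definition sub1 :: "vword \<Rightarrow> nat \<Rightarrow> vword" where
  "sub1 w e = keep_arc w (pos w (e, True)) (pos w (e, False))"

definition sub2 :: "vword \<Rightarrow> nat \<Rightarrow> vword" where
  "sub2 w e = keep_arc w (pos w (e, False)) (pos w (e, True))"

inductive hstep :: "vword \<Rightarrow> vword \<Rightarrow> bool" where
  rot: "vstring w \<Longrightarrow> hstep w (rotate1 w)"
| ren: "vstring w \<Longrightarrow> inj f \<Longrightarrow> hstep w (map (\<lambda>(e, b). (f e, b)) w)"
| move_a: "vstring (u @ v) \<Longrightarrow> e \<notin> fst ` set (u @ v) \<Longrightarrow>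
     hstep (u @ v) (u @ [(e, True), (e, False)] @ v)"
| move_b: "vstring (u @ v) \<Longrightarrow> e1 \<notin> fst ` set (u @ v) \<Longrightarrow> e2 \<notin> fst ` set (u @ v) \<Longrightarrow>
     e1 \<noteq> e2 \<Longrightarrow>
     xs \<in> {[(e1, True), (e2, False)], [(e2, False), (e1, True)]} \<Longrightarrow>
     ys \<in> {[(e1, False), (e2, True)], [(e2, True), (e1, False)]} \<Longrightarrow>
     hstep (u @ v) (xs @ u @ ys @ v)"
| move_c1: "vstring ([(e3, False), (e1, True)] @ u @ [(e1, False), (e2, True)] @ v @ [(e2, False), (e3, True)] @ x) \<Longrightarrow>
     hstep ([(e3, False), (e1, True)] @ u @ [(e1, False), (e2, True)] @ v @ [(e2, False), (e3, True)] @ x)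
           ([(e1, True), (e3, False)] @ u @ [(e2, True), (e1, False)] @ v @ [(e3, True), (e2, False)] @ x)"
| move_c2: "vstring ([(e3, False), (e1, True)] @ u @ [(e2, False), (e3, True)] @ v @ [(e1, False), (e2, True)] @ x) \<Longrightarrow>
     hstep ([(e3, False), (e1, True)] @ u @ [(e2, False), (e3, True)] @ v @ [(e1, False), (e2, True)] @ x)
           ([(e1, True), (e3, False)] @ u @ [(e3, True), (e2, False)] @ v @ [(e2, True), (e1, False)] @ x)"

definition homotopic :: "vword \<Rightarrow> vword \<Rightarrow> bool" where
  "homotopic = (\<lambda>x y. hstep x y \<or> hstep y x)\<^sup>*\<^sup>*"

definition htrivial :: "vword \<Rightarrow> bool" where
  "htrivial w \<longleftrightarrow> homotopic w []"

definition cls :: "vword \<Rightarrow> vword set" where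
  "cls w = {w'. homotopic w w'}"

definition NT :: "vword set set" where
  "NT = {cls w | w. vstring w \<and> \<not> htrivial w}"

text \<open>Since A_0 is free on NT, its k-th tensor power over R is the free module on
  NT^k; we represent its elements as finitely supported coefficient functions on
  lists of length k of basis elements (the list [c1,..,ck] standing for c1 \<otimes> .. \<otimes> ck).\<close>

type_synonym 'r tensor = "vword set list \<Rightarrow> 'r"

definition tensor_space :: "nat \<Rightarrow> ('r::comm_ring_1) tensor set" where
  "tensor_space k = {f. finite {ys. f ys \<noteq> 0} \<and>
      (\<forall>ys. f ys \<noteq> 0 \<longrightarrow> length ys = k \<and> set ys \<subseteq> NT)}"

abbreviation A0 :: "('r::comm_ring_1) tensor set" where
  "A0 \<equiv> tensor_space 1"

text \<open>The generator \<langle>alpha\<rangle> of A_0 (0 if alpha is trivial).\<close>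
definition gen :: "vword \<Rightarrow> ('r::comm_ring_1) tensor" where
  "gen w ys = (if \<not> htrivial w \<and> ys = [cls w] then 1 else 0)"

definition gen2 :: "vword \<Rightarrow> vword \<Rightarrow> ('r::comm_ring_1) tensor" where
  "gen2 b c ys = (if \<not> htrivial b \<and> \<not> htrivial c \<and> ys = [cls b, cls c] then 1 else 0)"

definition nu_gen :: "vword \<Rightarrow> ('r::comm_ring_1) tensor" where
  "nu_gen w = (\<lambda>ys. \<Sum>e\<in>arr w. gen2 (sub1 w e) (sub2 w e) ys - gen2 (sub2 w e) (sub1 w e) ys)"

definition nu_cls :: "vword set \<Rightarrow> ('r::comm_ring_1) tensor" where
  "nu_cls c = nu_gen (SOME w. w \<in> c \<and> vstring w)"

text \<open>id^{\<otimes>(k-1)} \<otimes> nu : A_0^{\<otimes>k} \<rightarrow> A_0^{\<otimes>(k+1)}, the R-linear extension of nu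
  applied to the last tensor factor.  For k = 1 this is nu itself.\<close>
definition nu_last :: "('r::comm_ring_1) tensor \<Rightarrow> 'r tensor" where
  "nu_last f ys = (if 2 \<le> length ys then
      (\<Sum>c\<in>{c. f (take (length ys - 2) ys @ [c]) \<noteq> 0}.
          f (take (length ys - 2) ys @ [c]) * nu_cls c (drop (length ys - 2) ys))
    else 0)"

definition nu_pow :: "nat \<Rightarrow> ('r::comm_ring_1) tensor \<Rightarrow> 'r tensor" where
  "nu_pow n = nu_last ^^ n"

end

theory Submission
  imports Defs
begin

text \<open>
  The formula for \<nu>\<langle>\<alpha>\<rangle> is a sum of one term per arrow, and its homotopy invariance is checked
  move by move. Rotations and renamings act compatibly on the sub-strings of every arrow. An arrow
  not involved in a move (a), (b) or (c) sees in its sub-strings either nothing or the same kind of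
  move. The kink created by move (a) has an empty first sub-string, so its term vanishes; the two
  arrows created by move (b) have swapped homotopic sub-strings, so their terms cancel; each of the
  three arrows of move (c) keeps one sub-string, while the other changes by a move (b).

  The coefficient of a \<otimes> b \<otimes> c in (id \<otimes> \<nu>) \<nu>\<langle>\<alpha>\<rangle> is a double sum over pairs of arrows (e, f)
  with f on one side of e. Chords with this property do not cross, so e then lies on one side of f,
  and the cyclic sum over (a, b, c) of the terms of (e, f) is the negative of that of (f, e).

  Spirality holds because the sub-strings of an arrow are shorter than the string: every application
  of \<nu> lowers the minimal length of a representative of the last tensor factor.
\<close>

section \<open>Positions on the circle\<close>

lemma pos_eq: "distinct w \<Longrightarrow> i < length w \<Longrightarrow> w ! i = x \<Longrightarrow> pos w x = i"
  unfolding pos_def by (rule the_equality) (auto simp: nth_eq_iff_index_eq)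

lemma pos_spec:
  assumes "distinct w" and "x \<in> set w"
  shows "pos w x < length w \<and> w ! pos w x = x"
proof -
  obtain i where "i < length w" "w ! i = x" using assms(2) by (auto simp: in_set_conv_nth)
  then show ?thesis using pos_eq[OF assms(1)] by simp
qed

lemma pos_less_length: "distinct w \<Longrightarrow> x \<in> set w \<Longrightarrow> pos w x < length w"
  using pos_spec by blast

lemma nth_pos: "distinct w \<Longrightarrow> x \<in> set w \<Longrightarrow> w ! pos w x = x"
  using pos_spec by blast

lemma pos_inj: "distinct w \<Longrightarrow> x \<in> set w \<Longrightarrow> y \<in> set w \<Longrightarrow> pos w x = pos w y \<Longrightarrow> x = y"
  by (metis nth_pos)

lemma pos_append_left: "distinct (xs @ ys) \<Longrightarrow> x \<in> set xs \<Longrightarrow> pos (xs @ ys) x = pos xs x"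
  by (rule pos_eq) (use pos_spec[of xs x] in \<open>auto simp: nth_append\<close>)

lemma pos_append_right:
  "distinct (xs @ ys) \<Longrightarrow> y \<in> set ys \<Longrightarrow> pos (xs @ ys) y = length xs + pos ys y"
  by (rule pos_eq) (use pos_spec[of ys y] in \<open>auto simp: nth_append\<close>)

lemma pos_Cons_head: "distinct (a # w) \<Longrightarrow> pos (a # w) a = 0"
  by (rule pos_eq) auto

lemma pos_Cons_tail: "distinct (a # w) \<Longrightarrow> x \<in> set w \<Longrightarrow> pos (a # w) x = Suc (pos w x)"
  using pos_append_right[of "[a]" w x] by simp

lemma pos_filter_less_iff:
  "distinct w \<Longrightarrow> x \<in> set (filter P w) \<Longrightarrow> y \<in> set (filter P w) \<Longrightarrow>
   (pos (filter P w) x < pos (filter P w) y) = (pos w x < pos w y)"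
proof (induction w)
  case (Cons a w)
  show ?case
  proof (cases "P a")
    case True
    then have "distinct (a # filter P w)" and "filter P (a # w) = a # filter P w"
      using Cons.prems by auto
    then show ?thesis using Cons
      by (cases "x = a"; cases "y = a") (auto simp: pos_Cons_head pos_Cons_tail)
  next
    case False
    then show ?thesis using Cons
      by (cases "x = a"; cases "y = a") (auto simp: pos_Cons_tail)
  qed
qed simp

lemma in_arc_cong:
  "(p < q) = (p' < q') \<Longrightarrow> (q < p) = (q' < p') \<Longrightarrow> (p < k) = (p' < k') \<Longrightarrow>
   (k < p) = (k' < p') \<Longrightarrow> (q < k) = (q' < k') \<Longrightarrow> (k < q) = (k' < q') \<Longrightarrow>
   in_arc p q k = in_arc p' q' k'"
  unfolding in_arc_def by auto

definition between :: "vword \<Rightarrow> nat \<times> bool \<Rightarrow> nat \<times> bool \<Rightarrow> nat \<times> bool \<Rightarrow> bool" where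
  "between w x y z = in_arc (pos w x) (pos w y) (pos w z)"

lemma between_filter:
  assumes "distinct w" and "x \<in> set (filter P w)" "y \<in> set (filter P w)" "z \<in> set (filter P w)"
  shows "between (filter P w) x y z = between w x y z"
  unfolding between_def
  by (rule in_arc_cong) (use pos_filter_less_iff[OF assms(1)] assms(2-4) in blast)+

section \<open>Virtual strings and their homotopy\<close>

lemma vstring_distinct: "vstring w \<Longrightarrow> distinct w"
  unfolding vstring_def by simp

lemma vstring_partner: "vstring w \<Longrightarrow> (f, b) \<in> set w \<Longrightarrow> (f, \<not> b) \<in> set w"
  unfolding vstring_def by blast

lemma vstring_both_ends: "vstring w \<Longrightarrow> (f, b) \<in> set w \<Longrightarrow> (f, True) \<in> set w \<and> (f, False) \<in> set w"
  using vstring_partner[of w f b] by (cases b) auto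

lemma vstring_filter: "vstring w \<Longrightarrow> vstring (filter (\<lambda>(f, b). K f) w)"
  unfolding vstring_def by auto

lemma vstring_swap_adjacent: "vstring (p @ [a, b] @ q) \<Longrightarrow> vstring (p @ [b, a] @ q)"
  unfolding vstring_def by auto

lemma vstring_swap_three_pairs:
  assumes "vstring ([x1, x2] @ u @ [x3, x4] @ v @ [x5, x6] @ x)"
  shows "vstring ([x2, x1] @ u @ [x4, x3] @ v @ [x6, x5] @ x)"
proof -
  have "vstring ([x2, x1] @ u @ [x3, x4] @ v @ [x5, x6] @ x)"
    using vstring_swap_adjacent[of "[]"] assms by simp
  then have "vstring (([x2, x1] @ u) @ [x4, x3] @ v @ [x5, x6] @ x)"
    using vstring_swap_adjacent[of "[x2, x1] @ u"] by simp
  then show ?thesis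
    using vstring_swap_adjacent[of "[x2, x1] @ u @ [x4, x3] @ v"] by simp
qed

definition both_ends_in :: "vword \<Rightarrow> nat \<Rightarrow> bool" where
  "both_ends_in L h \<longleftrightarrow> (h, True) \<in> set L \<and> (h, False) \<in> set L"

definition both_ends_out :: "vword \<Rightarrow> vword \<Rightarrow> nat \<Rightarrow> bool" where
  "both_ends_out L Lo h \<longleftrightarrow> both_ends_in Lo h \<and> (h, True) \<notin> set L \<and> (h, False) \<notin> set L"

lemma finite_arr: "finite (arr w)"
proof -
  have "arr w \<subseteq> fst ` set w" unfolding arr_def by force
  then show ?thesis using finite_subset by blast
qed

lemma arr_iff_head: "vstring w \<Longrightarrow> e \<in> arr w \<longleftrightarrow> (e, False) \<in> set w"
  unfolding arr_def using vstring_partner[of w e True] vstring_partner[of w e False] by auto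

lemma fresh_notin: "e \<notin> fst ` set w \<Longrightarrow> (e, b) \<notin> set w"
  by (metis fst_conv image_eqI)

lemma homotopic_refl: "homotopic x x"
  unfolding homotopic_def by simp

lemma homotopic_sym: "homotopic x y \<Longrightarrow> homotopic y x"
  unfolding homotopic_def by (rule symp_rtranclp[THEN sympD]) (auto simp: symp_def)

lemma homotopic_trans: "homotopic x y \<Longrightarrow> homotopic y z \<Longrightarrow> homotopic x z"
  unfolding homotopic_def by simp

lemma hstep_homotopic: "hstep x y \<Longrightarrow> homotopic x y"
  unfolding homotopic_def by auto

lemma hstep_homotopic_rev: "hstep y x \<Longrightarrow> homotopic x y"
  unfolding homotopic_def by auto

lemma cls_homotopic: "homotopic x y \<Longrightarrow> cls x = cls y"
  unfolding cls_def using homotopic_sym homotopic_trans by blast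

lemma htrivial_homotopic: "homotopic x y \<Longrightarrow> htrivial x = htrivial y"
  unfolding htrivial_def using homotopic_sym homotopic_trans by blast

lemma htrivial_Nil: "htrivial []"
  unfolding htrivial_def by (rule homotopic_refl)

lemma hstep_vstring: "hstep x y \<Longrightarrow> vstring x \<and> vstring y"
proof (induction rule: hstep.induct)
  case (rot w)
  then show ?case by (simp add: vstring_def)
next
  case (ren w f)
  have inj: "inj (\<lambda>(e::nat, b::bool). (f e, b))"
    using ren(2) by (auto simp: inj_def)
  have "distinct (map (\<lambda>(e, b). (f e, b)) w)"
    using ren(1) inj by (simp add: distinct_map vstring_def inj_on_subset[OF inj])
  moreover have "\<forall>e b. (e, b) \<in> set (map (\<lambda>(e, b). (f e, b)) w) \<longrightarrow> (e, \<not> b) \<in> set (map (\<lambda>(e, b). (f e, b)) w)"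
    using ren(1) unfolding vstring_def by force
  ultimately show ?case using ren unfolding vstring_def by blast
next
  case (move_a u v e)
  then show ?case using fresh_notin[OF move_a(2)] unfolding vstring_def by auto
next
  case (move_b u v e1 e2 xs ys)
  have "distinct (xs @ u @ ys @ v)"
    using move_b fresh_notin[OF move_b(2)] fresh_notin[OF move_b(3)] by (auto simp: vstring_def)
  moreover have "\<forall>e b. (e, b) \<in> set (xs @ u @ ys @ v) \<longrightarrow> (e, \<not> b) \<in> set (xs @ u @ ys @ v)"
    using move_b(1,5,6) unfolding vstring_def by auto
  ultimately show ?case using move_b unfolding vstring_def by blast
next
  case (move_c1 e3 e1 u e2 v x)
  then show ?case using vstring_swap_three_pairs by blast
next
  case (move_c2 e3 e1 u e2 v x)
  then show ?case using vstring_swap_three_pairs by blast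
qed

lemma homotopic_vstring: "homotopic x y \<Longrightarrow> vstring x \<Longrightarrow> vstring y"
  unfolding homotopic_def by (induction rule: rtranclp_induct) (auto dest: hstep_vstring)

section \<open>The contribution of a single arrow\<close>

definition in_sub1 :: "vword \<Rightarrow> nat \<Rightarrow> nat \<Rightarrow> bool" where
  "in_sub1 w e f \<longleftrightarrow> between w (e, True) (e, False) (f, True) \<and> between w (e, True) (e, False) (f, False)"

definition in_sub2 :: "vword \<Rightarrow> nat \<Rightarrow> nat \<Rightarrow> bool" where
  "in_sub2 w e f \<longleftrightarrow> between w (e, False) (e, True) (f, True) \<and> between w (e, False) (e, True) (f, False)"

lemma sub1_eq_filter: "sub1 w e = filter (\<lambda>(f, b). in_sub1 w e f) w"
  unfolding sub1_def keep_arc_def in_sub1_def between_def by simp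

lemma sub2_eq_filter: "sub2 w e = filter (\<lambda>(f, b). in_sub2 w e f) w"
  unfolding sub2_def keep_arc_def in_sub2_def between_def by simp

lemma not_in_sub1_self: "\<not> in_sub1 w e e"
  unfolding in_sub1_def between_def in_arc_def by auto

lemma not_in_sub2_self: "\<not> in_sub2 w e e"
  unfolding in_sub2_def between_def in_arc_def by auto

lemma vstring_sub: "vstring w \<Longrightarrow> vstring (sub1 w e) \<and> vstring (sub2 w e)"
  unfolding sub1_eq_filter sub2_eq_filter using vstring_filter by blast

definition nu_term :: "vword \<Rightarrow> nat \<Rightarrow> ('r::comm_ring_1) tensor" where
  "nu_term w e = (\<lambda>ys. gen2 (sub1 w e) (sub2 w e) ys - gen2 (sub2 w e) (sub1 w e) ys)"

lemma nu_gen_eq_sum_nu_term: "nu_gen w = (\<lambda>ys. \<Sum>e\<in>arr w. nu_term w e ys)"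
  unfolding nu_gen_def nu_term_def by simp

lemma gen2_homotopic: "homotopic b b' \<Longrightarrow> homotopic c c' \<Longrightarrow> gen2 b c = gen2 b' c'"
  unfolding gen2_def using cls_homotopic htrivial_homotopic by presburger

lemma nu_term_homotopic:
  assumes "homotopic (sub1 w e) (sub1 w' e')" and "homotopic (sub2 w e) (sub2 w' e')"
  shows "nu_term w e = nu_term w' e'"
  unfolding nu_term_def by (simp add: gen2_homotopic[OF assms] gen2_homotopic[OF assms(2,1)])

lemma nu_term_swap_cancel:
  assumes "homotopic (sub1 w e) (sub2 w' e')" and "homotopic (sub2 w e) (sub1 w' e')"
  shows "(\<lambda>ys. nu_term w e ys + nu_term w' e' ys) = (\<lambda>_. 0)"
  unfolding nu_term_def by (simp add: gen2_homotopic[OF assms] gen2_homotopic[OF assms(2,1)])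

lemma nu_term_sub1_Nil: "sub1 w e = [] \<Longrightarrow> nu_term w e = (\<lambda>_. 0)"
  unfolding nu_term_def gen2_def using htrivial_Nil by auto


section \<open>Derived homotopies\<close>

lemma homotopic_rotate_append: "vstring (a @ b) \<Longrightarrow> homotopic (a @ b) (b @ a)"
proof (induction a arbitrary: b)
  case Nil
  then show ?case by (simp add: homotopic_refl)
next
  case (Cons x a)
  have step: "hstep (x # a @ b) (a @ (b @ [x]))" using hstep.rot[OF Cons.prems] by simp
  then have "homotopic (a @ (b @ [x])) ((b @ [x]) @ a)"
    using Cons.IH hstep_vstring by blast
  then show ?case using hstep_homotopic[OF step] homotopic_trans by simp
qed

lemma homotopic_rotate_Cons: "vstring (x # w) \<Longrightarrow> homotopic (w @ [x]) (x # w)"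
  using homotopic_rotate_append[of "[x]" w] homotopic_sym by simp

lemma filter_rotate1_homotopic:
  assumes "vstring (filter P w)"
  shows "homotopic (filter P w) (filter P (rotate1 w))"
proof (cases w)
  case (Cons a r)
  then show ?thesis
    using hstep_homotopic[OF hstep.rot[OF assms]] by (cases "P a") (simp_all add: homotopic_refl)
qed (simp add: homotopic_refl)

lemma homotopic_del_kink:
  "vstring (p @ q) \<Longrightarrow> e \<notin> fst ` set (p @ q) \<Longrightarrow> homotopic (p @ [(e, True), (e, False)] @ q) (p @ q)"
  using hstep.move_a hstep_homotopic_rev by blast

lemma homotopic_del_reverse_kink:
  assumes v: "vstring (p @ q)" and e: "e \<notin> fst ` set (p @ q)"
  shows "homotopic (p @ [(e, False), (e, True)] @ q) (p @ q)"
proof -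
  \<comment> \<open>Move (b) with an auxiliary arrow f produces the letters (e, False) (f, True) (f, False) (e, True);
      move (a) removes the kink (f, True) (f, False).\<close>
  obtain f where f: "f \<notin> fst ` set (p @ q)" "f \<noteq> e"
    using ex_new_if_finite[of "insert e (fst ` set (p @ q))"] by auto
  have vq: "vstring (q @ p)" using homotopic_vstring[OF homotopic_rotate_append[OF v] v] .
  have "hstep ([] @ (q @ p)) ([(e, False), (f, True)] @ [] @ [(f, False), (e, True)] @ (q @ p))"
    by (rule hstep.move_b) (use vq f e in auto)
  then have created: "homotopic (q @ p) ([(e, False), (f, True), (f, False), (e, True)] @ q @ p)"
    using hstep_homotopic by simp
  have v2: "vstring ([(e, False), (e, True)] @ q @ p)"
    using vq fresh_notin[OF e] unfolding vstring_def by auto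
  have "hstep ([(e, False)] @ ((e, True) # q @ p)) ([(e, False)] @ [(f, True), (f, False)] @ ((e, True)
    # q @ p))"
    by (rule hstep.move_a) (use v2 f in auto)
  then have "homotopic ([(e, False), (e, True)] @ q @ p) ([(e, False), (f, True), (f, False), (e, True)]
    @ q @ p)"
    using hstep_homotopic by simp
  then have "homotopic ([(e, False), (e, True)] @ q @ p) (q @ p)"
    using created homotopic_sym homotopic_trans by blast
  moreover have "homotopic (p @ [(e, False), (e, True)] @ q) (([(e, False), (e, True)] @ q) @ p)"
    by (rule homotopic_rotate_append)
      (use homotopic_vstring[OF homotopic_rotate_append[of "[(e, False), (e, True)] @ q" p]] v2 in simp)
  ultimately show ?thesis
    using homotopic_rotate_append[OF vq] homotopic_trans by (metis append_assoc)
qed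

lemma vstring_enclose_fresh:
  assumes "vstring p" and "e \<notin> fst ` set p"
  shows "vstring ([(e, b)] @ p @ [(e, \<not> b)])"
  using assms fresh_notin[OF assms(2)] unfolding vstring_def by (cases b) auto

lemma homotopic_del_enclosing_arrow:
  assumes "vstring p" and "e \<notin> fst ` set p"
  shows "homotopic ([(e, True)] @ p @ [(e, False)]) p"
proof -
  have "homotopic ((e, True) # p @ [(e, False)]) ((p @ [(e, False)]) @ [(e, True)])"
    using homotopic_rotate_append[of "[(e, True)]"
      "p @ [(e, False)]"] vstring_enclose_fresh[OF assms, of True] by simp
  moreover have "homotopic (p @ [(e, False), (e, True)] @ []) (p @ [])"
    by (rule homotopic_del_reverse_kink) (use assms in auto)
  ultimately show ?thesis using homotopic_trans by auto
qed

lemma homotopic_del_enclosing_reverse_arrow: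
  assumes "vstring p" and "e \<notin> fst ` set p"
  shows "homotopic ([(e, False)] @ p @ [(e, True)]) p"
proof -
  have "homotopic ((e, False) # p @ [(e, True)]) ((p @ [(e, True)]) @ [(e, False)])"
    using homotopic_rotate_append[of "[(e, False)]"
      "p @ [(e, True)]"] vstring_enclose_fresh[OF assms, of False] by simp
  moreover have "homotopic (p @ [(e, True), (e, False)] @ []) (p @ [])"
    by (rule homotopic_del_kink) (use assms in auto)
  ultimately show ?thesis using homotopic_trans by auto
qed

lemma homotopic_move_b_inv:
  assumes "vstring (p @ q)" and "e1 \<notin> fst ` set (p @ q)" and "e2 \<notin> fst ` set (p @ q)" and "e1 \<noteq> e2"
    and "xs \<in> {[(e1, True), (e2, False)], [(e2, False), (e1, True)]}"
    and "ys \<in> {[(e1, False), (e2, True)], [(e2, True), (e1, False)]}"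
  shows "homotopic (xs @ p @ ys @ q) (p @ q)"
  using hstep.move_b[OF assms] by (rule hstep_homotopic_rev)

lemma homotopic_move_b_inv_rotated:
  assumes v: "vstring (p @ q)" and "e1 \<notin> fst ` set (p @ q)" and "e2 \<notin> fst ` set (p @ q)" and "e1 \<noteq> e2"
  shows "homotopic ([(e1, True)] @ p @ [(e1, False), (e2, True)] @ q @ [(e2, False)]) (p @ q)"
proof -
  have h: "homotopic ((e2, False) # (e1, True) # p @ [(e1, False), (e2, True)] @ q) (p @ q)"
    using homotopic_move_b_inv[OF assms, where xs = "[(e2, False), (e1, True)]" and ys =
      "[(e1, False), (e2, True)]"]
    by simp
  then show ?thesis
    using homotopic_trans[OF homotopic_rotate_Cons[OF homotopic_vstring[OF homotopic_sym[OF h] v]] h]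
    by simp
qed

lemma homotopic_move_b_inv_rotated':
  assumes v: "vstring (p @ q)" and "e1 \<notin> fst ` set (p @ q)" and "e2 \<notin> fst ` set (p @ q)" and "e1 \<noteq> e2"
  shows "homotopic ([(e1, False)] @ p @ [(e1, True), (e2, False)] @ q @ [(e2, True)]) (p @ q)"
proof -
  have h: "homotopic ((e2, True) # (e1, False) # p @ [(e1, True), (e2, False)] @ q) (p @ q)"
    using homotopic_move_b_inv[OF assms(1,3,2), where xs = "[(e2, True), (e1, False)]" and ys =
      "[(e1, True), (e2, False)]"]
      assms(4) by auto
  then show ?thesis
    using homotopic_trans[OF homotopic_rotate_Cons[OF homotopic_vstring[OF homotopic_sym[OF h] v]] h]
    by simp
qed

section \<open>Invariance of the cobracket formula under homotopy\<close>

lemma in_arc_rotate: "p \<le> n \<Longrightarrow> q \<le> n \<Longrightarrow> k \<le> n \<Longrightarrow>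
  in_arc (if p = 0 then n else p - 1) (if q = 0 then n else q - 1) (if k = 0 then n else k - 1) = in_arc p q k"
  unfolding in_arc_def by (cases "p = 0"; cases "q = 0"; cases "k = 0") auto

lemma pos_rotate1:
  assumes d: "distinct w" and x: "x \<in> set w"
  shows "pos (rotate1 w) x = (if pos w x = 0 then length w - 1 else pos w x - 1)"
proof (cases w)
  case Nil then show ?thesis using x by simp
next
  case (Cons a r)
  have d': "distinct (r @ [a])" using d Cons by simp
  show ?thesis
  proof (cases "x = a")
    case True
    then show ?thesis using pos_append_right[OF d', of a] pos_Cons_head[of a r] d Cons
      by (simp add: pos_eq)
  next
    case False
    then have xr: "x \<in> set r" using x Cons by simp
    then show ?thesis using pos_append_left[OF d' xr] pos_Cons_tail[of a r x] d Cons
      by simp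
  qed
qed

lemma between_rotate1:
  assumes d: "distinct w" and xyz: "x \<in> set w" "y \<in> set w" "z \<in> set w"
  shows "between (rotate1 w) x y z = between w x y z"
proof -
  have ne: "w \<noteq> []" using xyz by auto
  show ?thesis
    unfolding between_def pos_rotate1[OF d xyz(1)] pos_rotate1[OF d xyz(2)] pos_rotate1[OF d xyz(3)]
    apply (rule in_arc_rotate)
    using pos_less_length[OF d] xyz ne by (auto simp: less_Suc_eq_le[symmetric])
qed

lemma in_sub1_rotate1:
  "vstring w \<Longrightarrow> e \<in> arr w \<Longrightarrow> (f, b) \<in> set w \<Longrightarrow> in_sub1 (rotate1 w) e f = in_sub1 w e f"
  unfolding in_sub1_def using between_rotate1[of w] vstring_distinct vstring_both_ends arr_iff_head
  by (metis (no_types, lifting) arr_def mem_Collect_eq)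

lemma in_sub2_rotate1:
  "vstring w \<Longrightarrow> e \<in> arr w \<Longrightarrow> (f, b) \<in> set w \<Longrightarrow> in_sub2 (rotate1 w) e f = in_sub2 w e f"
  unfolding in_sub2_def using between_rotate1[of w] vstring_distinct vstring_both_ends arr_iff_head
  by (metis (no_types, lifting) arr_def mem_Collect_eq)

lemma nu_gen_rotate1: "vstring w \<Longrightarrow> (nu_gen (rotate1 w) :: ('r::comm_ring_1) tensor) = nu_gen w"
proof -
  assume v: "vstring w"
  have "nu_term (rotate1 w) e = (nu_term w e :: 'r tensor)" if e: "e \<in> arr w" for e
  proof (rule nu_term_homotopic)
    have "sub1 (rotate1 w) e = filter (\<lambda>(f, b). in_sub1 w e f) (rotate1 w)"
      unfolding sub1_eq_filter by (rule filter_cong) (auto simp: in_sub1_rotate1[OF v e])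
    then show "homotopic (sub1 (rotate1 w) e) (sub1 w e)"
      using filter_rotate1_homotopic[of "\<lambda>(f, b). in_sub1 w e f" w] vstring_filter[OF v] homotopic_sym
      unfolding sub1_eq_filter by metis
    have "sub2 (rotate1 w) e = filter (\<lambda>(f, b). in_sub2 w e f) (rotate1 w)"
      unfolding sub2_eq_filter by (rule filter_cong) (auto simp: in_sub2_rotate1[OF v e])
    then show "homotopic (sub2 (rotate1 w) e) (sub2 w e)"
      using filter_rotate1_homotopic[of "\<lambda>(f, b). in_sub2 w e f" w] vstring_filter[OF v] homotopic_sym
      unfolding sub2_eq_filter by metis
  qed
  moreover have "arr (rotate1 w) = arr w" unfolding arr_def by simp
  ultimately show ?thesis unfolding nu_gen_eq_sum_nu_term by (metis (no_types, lifting) sum.cong)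
qed

lemma pos_map_inj:
  assumes d: "distinct w" and g: "inj g" and x: "x \<in> set w"
  shows "pos (map g w) (g x) = pos w x"
  apply (rule pos_eq)
  using d g pos_spec[OF d x] by (auto simp: distinct_map inj_on_subset[OF g])

lemma nu_gen_rename:
  assumes v: "vstring w" and f: "inj f"
  shows "(nu_gen (map (\<lambda>(e, b). (f e, b)) w) :: ('r::comm_ring_1) tensor) = nu_gen w"
proof -
  define g where "g = (\<lambda>(e::nat, b::bool). (f e, b))"
  have g: "inj g" using f by (auto simp: inj_def g_def)
  have gs: "g (h, b) = (f h, b)" for h b unfolding g_def by simp
  have d: "distinct w" using v vstring_distinct by blast
  let ?w = "map g w"
  have between: "between ?w (g x) (g y) (g z) = between w x y z" if "x \<in> set w" "y \<in> set w"
    "z \<in> set w" for x y z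
    unfolding between_def using pos_map_inj[OF d g] that by simp
  have arrw: "arr ?w = f ` arr w"
    unfolding arr_def g_def by force
  have inx: "in_sub1 ?w (f e) (f h) = in_sub1 w e h" "in_sub2 ?w (f e) (f h) = in_sub2 w e h"
    if e: "e \<in> arr w" and h: "(h, b) \<in> set w" for e h b
  proof -
    have "(e, True) \<in> set w" "(e, False) \<in> set w" using e v arr_iff_head arr_def by auto
    moreover have "(h, True) \<in> set w" "(h, False) \<in> set w" using vstring_both_ends[OF v h] by auto
    ultimately show "in_sub1 ?w (f e) (f h) = in_sub1 w e h" "in_sub2 ?w (f e) (f h) = in_sub2 w e h"
      unfolding in_sub1_def in_sub2_def using between gs by metis+
  qed
  have sub: "sub1 ?w (f e) = map g (sub1 w e)" "sub2 ?w (f e) = map g (sub2 w e)" if e: "e \<in> arr w" for e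
  proof -
    show "sub1 ?w (f e) = map g (sub1 w e)" unfolding sub1_eq_filter filter_map
      by (rule arg_cong[where f = "map g"], rule filter_cong) (auto simp: gs inx[OF e])
    show "sub2 ?w (f e) = map g (sub2 w e)" unfolding sub2_eq_filter filter_map
      by (rule arg_cong[where f = "map g"], rule filter_cong) (auto simp: gs inx[OF e])
  qed
  have nu_term: "nu_term ?w (f e) = (nu_term w e :: 'r tensor)" if e: "e \<in> arr w" for e
  proof (rule nu_term_homotopic)
    show "homotopic (sub1 ?w (f e)) (sub1 w e)" unfolding sub[OF e]
      using hstep.ren[OF vstring_filter[OF v] f] unfolding sub1_eq_filter g_def by (rule hstep_homotopic_rev)
    show "homotopic (sub2 ?w (f e)) (sub2 w e)" unfolding sub[OF e]
      using hstep.ren[OF vstring_filter[OF v] f] unfolding sub2_eq_filter g_def by (rule hstep_homotopic_rev)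
  qed
  have "inj_on f (arr w)" using f inj_on_subset by blast
  then have "(\<lambda>ys. \<Sum>e\<in>arr ?w. (nu_term ?w e ys :: 'r)) = (\<lambda>ys. \<Sum>e\<in>arr w. nu_term w e ys)"
    unfolding arrw using nu_term by (simp add: sum.reindex)
  then show ?thesis unfolding nu_gen_eq_sum_nu_term g_def .
qed

lemma between_adjacent:
  assumes d: "distinct (p @ [x1, x2] @ q)" and z: "z1 \<in> set (p @ q)" "z2 \<in> set (p @ q)"
  shows "between (p @ [x1, x2] @ q) z1 z2 x1 = between (p @ [x1, x2] @ q) z1 z2 x2"
proof -
  let ?w = "p @ [x1, x2] @ q"
  have p1: "pos ?w x1 = length p" using pos_append_right[OF d, of x1] d pos_Cons_head[of x1 "x2 # q"] by simp
  have p2: "pos ?w x2 = Suc (length p)"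
    using pos_append_right[OF d, of x2] d pos_Cons_tail[of x1 "x2 # q" x2] pos_Cons_head[of x2 q] by simp
  have n: "pos ?w z \<noteq> length p \<and> pos ?w z \<noteq> Suc (length p)" if "z \<in> set (p @ q)" for z
  proof -
    have "z \<noteq> x1" "z \<noteq> x2" using d that by auto
    then show ?thesis using p1 p2 pos_inj[OF d, of z x1] pos_inj[OF d, of z x2] that by auto
  qed
  show ?thesis unfolding between_def p1 p2 using n[OF z(1)] n[OF z(2)]
    unfolding in_arc_def by auto
qed

lemma in_sub_filter:
  assumes v: "vstring w'" and w: "w = filter (\<lambda>(h, b). Q h) w'" and g: "(g, True) \<in> set w"
    and h: "(h, b) \<in> set w"
  shows "in_sub1 w' g h = in_sub1 w g h \<and> in_sub2 w' g h = in_sub2 w g h"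
proof -
  have vw: "vstring w" using vstring_filter[OF v] w by simp
  have d: "distinct w'" using v vstring_distinct by blast
  have s: "(g, True) \<in> set w" "(g, False) \<in> set w" "(h, True) \<in> set w" "(h, False) \<in> set w"
    using vstring_both_ends[OF vw g] vstring_both_ends[OF vw h] by auto
  show ?thesis unfolding in_sub1_def in_sub2_def w using between_filter[OF d] s unfolding w by metis
qed

lemma sub_eq_filter_old:
  assumes v: "vstring w'" and w: "w = filter (\<lambda>(h, b). Q h) w'" and g: "g \<in> arr w"
  shows "sub1 w' g = filter (\<lambda>(h, b). if Q h then in_sub1 w g h else in_sub1 w' g h) w'"
        "sub2 w' g = filter (\<lambda>(h, b). if Q h then in_sub2 w g h else in_sub2 w' g h) w'"
proof -
  have g': "(g, True) \<in> set w" using g unfolding arr_def by simp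
  have vw: "vstring w" using vstring_filter[OF v] w by simp
  have *: "in_sub1 w' g h = in_sub1 w g h" "in_sub2 w' g h = in_sub2 w g h" if "(h, b) \<in> set w'"
    "Q h" for h b
  proof -
    have "(h, b) \<in> set w" using that w by auto
    then show "in_sub1 w' g h = in_sub1 w g h"
      "in_sub2 w' g h = in_sub2 w g h" using in_sub_filter[OF v w g'] by auto
  qed
  show "sub1 w' g = filter (\<lambda>(h, b). if Q h then in_sub1 w g h else in_sub1 w' g h) w'"
    unfolding sub1_eq_filter
  proof (rule filter_cong)
    fix x assume x: "x \<in> set w'"
    obtain h b where xe: "x = (h, b)" by (cases x)
    show "(case x of (h, b) \<Rightarrow> in_sub1 w' g h) = (case x of (h, b) \<Rightarrow> if Q h then in_sub1 w g h else
      in_sub1 w' g h)"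
      using *(1)[of h b] x xe by auto
  qed simp
  show "sub2 w' g = filter (\<lambda>(h, b). if Q h then in_sub2 w g h else in_sub2 w' g h) w'"
    unfolding sub2_eq_filter
  proof (rule filter_cong)
    fix x assume x: "x \<in> set w'"
    obtain h b where xe: "x = (h, b)" by (cases x)
    show "(case x of (h, b) \<Rightarrow> in_sub2 w' g h) = (case x of (h, b) \<Rightarrow> if Q h then in_sub2 w g h else
      in_sub2 w' g h)"
      using *(2)[of h b] x xe by auto
  qed simp
qed

lemma filter_if_all_True:
  assumes "\<And>h b. (h, b) \<in> set u \<Longrightarrow> Q h"
  shows "filter (\<lambda>(h, b). if Q h then A h else B h) u = filter (\<lambda>(h, b). A h) u"
  by (rule filter_cong) (use assms in auto)

lemma nu_term_move_a_new_arrow: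
  assumes "distinct (u @ [(e, True), (e, False)] @ v)"
  shows "nu_term (u @ [(e, True), (e, False)] @ v) e = (\<lambda>_. 0)"
proof (rule nu_term_sub1_Nil)
  let ?w' = "u @ [(e, True), (e, False)] @ v"
  have "pos ?w' (e, True) = length u" "pos ?w' (e, False) = Suc (length u)"
    using pos_append_right[OF assms, of "(e, True)"] pos_append_right[OF assms, of "(e, False)"] assms
      pos_Cons_head[of "(e, True)" "(e, False) # v"] pos_Cons_tail[of "(e, True)" "(e, False) # v"
        "(e, False)"]
      pos_Cons_head[of "(e, False)" v]
    by auto
  then have "\<not> in_sub1 ?w' e h" for h unfolding in_sub1_def between_def in_arc_def by auto
  then show "sub1 ?w' e = []" unfolding sub1_eq_filter by (simp add: filter_empty_conv)
qed

lemma nu_term_move_a_old_arrow: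
  assumes v: "vstring (u @ v)" and e: "e \<notin> fst ` set (u @ v)" and g: "g \<in> arr (u @ v)"
  shows "nu_term (u @ [(e, True), (e, False)] @ v) g = nu_term (u @ v) g"
proof -
  let ?w = "u @ v" and ?w' = "u @ [(e, True), (e, False)] @ v"
  have v': "vstring ?w'" using hstep_vstring[OF hstep.move_a[OF v e]] by blast
  have old_u: "\<And>h b. (h, b) \<in> set u \<Longrightarrow> h \<noteq> e" and old_v: "\<And>h b. (h, b) \<in> set v \<Longrightarrow> h \<noteq> e"
    using fresh_notin[OF e] by auto
  then have "filter (\<lambda>(h, b). h \<noteq> e) u = u" "filter (\<lambda>(h, b). h \<noteq> e) v = v"
    by (auto intro!: filter_True)
  then have filt: "?w = filter (\<lambda>(h, b). h \<noteq> e) ?w'" by simp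
  note sub_eq = sub_eq_filter_old[OF v' filt g]
  let ?P1 = "\<lambda>(h, b). in_sub1 ?w g h" and ?P2 = "\<lambda>(h, b). in_sub2 ?w g h"
  have s1: "sub1 ?w' g = filter ?P1 u @
      filter (\<lambda>(h, b). if h \<noteq> e then in_sub1 ?w g h else in_sub1 ?w' g h) [(e, True), (e, False)] @ filter ?P1 v"
    by (simp only: sub_eq filter_append filter_if_all_True[OF old_u] filter_if_all_True[OF old_v])
  have s2: "sub2 ?w' g = filter ?P2 u @
      filter (\<lambda>(h, b). if h \<noteq> e then in_sub2 ?w g h else in_sub2 ?w' g h) [(e, True), (e, False)] @ filter ?P2 v"
    by (simp only: sub_eq filter_append filter_if_all_True[OF old_u] filter_if_all_True[OF old_v])
  have "homotopic (filter (\<lambda>(h, b). K h) u @ [(e, True), (e, False)] @ filter (\<lambda>(h, b). K h) v)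
      (filter (\<lambda>(h, b). K h) u @ filter (\<lambda>(h, b). K h) v)" for K
    by (rule homotopic_del_kink) (use vstring_filter[OF v, of K] e in auto)
  note kink = this[of "in_sub1 ?w g"] this[of "in_sub2 ?w g"]
  show ?thesis
  proof (rule nu_term_homotopic)
    show "homotopic (sub1 ?w' g) (sub1 ?w g)"
      unfolding s1 unfolding sub1_eq_filter filter_append using kink homotopic_refl by simp
    show "homotopic (sub2 ?w' g) (sub2 ?w g)"
      unfolding s2 unfolding sub2_eq_filter filter_append using kink homotopic_refl by simp
  qed
qed

lemma nu_gen_move_a:
  assumes v: "vstring (u @ v)" and e: "e \<notin> fst ` set (u @ v)"
  shows "(nu_gen (u @ [(e, True), (e, False)] @ v) :: ('r::comm_ring_1) tensor) = nu_gen (u @ v)"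
proof -
  have "distinct (u @ [(e, True), (e, False)] @ v)"
    using hstep_vstring[OF hstep.move_a[OF v e]] vstring_distinct by blast
  note new = nu_term_move_a_new_arrow[OF this, simplified]
  have "arr (u @ [(e, True), (e, False)] @ v) = insert e (arr (u @ v))" "e \<notin> arr (u @ v)"
    unfolding arr_def using fresh_notin[OF e] by auto
  moreover have "(\<Sum>g\<in>arr (u @ v). nu_term (u @ [(e, True), (e, False)] @ v) g zs) =
      (\<Sum>g\<in>arr (u @ v). (nu_term (u @ v) g zs :: 'r))" for zs
    by (intro sum.cong) (simp_all add: nu_term_move_a_old_arrow[OF v e, simplified])
  ultimately show ?thesis
    unfolding nu_gen_eq_sum_nu_term by (simp add: finite_arr new)
qed


lemma pos_two_pairs:
  assumes d: "distinct ([a, b] @ u @ [c, d] @ v)"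
  defines "w \<equiv> [a, b] @ u @ [c, d] @ v"
  shows "pos w a = 0" "pos w b = 1" "pos w c = length u + 2" "pos w d = length u + 3"
    "z \<in> set u \<Longrightarrow> pos w z = 2 + pos u z"
    "z \<in> set v \<Longrightarrow> pos w z = length u + 4 + pos v z"
  unfolding w_def
  by (rule pos_eq; use d pos_spec[of u z] pos_spec[of v z] in \<open>auto simp: nth_append\<close>)+

lemma in_arc_two_blocks:
  assumes "(2 \<le> k \<and> k < n + 2) \<or> n + 4 \<le> k"
  shows "t \<le> 1 \<Longrightarrow> n + 2 \<le> h \<Longrightarrow> h \<le> n + 3 \<Longrightarrow> in_arc t h k = (k < n + 2)"
    and "h \<le> 1 \<Longrightarrow> n + 2 \<le> t \<Longrightarrow> t \<le> n + 3 \<Longrightarrow> in_arc t h k = (n + 4 \<le> k)"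
  using assms unfolding in_arc_def by auto

locale move_b =
  fixes u v :: vword and e1 e2 :: nat and xs ys :: vword
  assumes vstring_old: "vstring (u @ v)"
    and fresh1: "e1 \<notin> fst ` set (u @ v)" and fresh2: "e2 \<notin> fst ` set (u @ v)" and ne: "e1 \<noteq> e2"
    and xs: "xs \<in> {[(e1, True), (e2, False)], [(e2, False), (e1, True)]}"
    and ys: "ys \<in> {[(e1, False), (e2, True)], [(e2, True), (e1, False)]}"
begin

lemma vstring_new: "vstring (xs @ u @ ys @ v)"
  using hstep_vstring[OF hstep.move_b[OF vstring_old fresh1 fresh2 ne xs ys]] by blast

lemma distinct_old: "distinct (u @ v)"
  using vstring_old vstring_distinct by blast

lemma distinct_new: "distinct (xs @ u @ ys @ v)"
  using vstring_new vstring_distinct by blast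

lemma old_arrow: "(h, b) \<in> set (u @ v) \<Longrightarrow> h \<noteq> e1 \<and> h \<noteq> e2"
  using fresh_notin[OF fresh1] fresh_notin[OF fresh2] by blast

lemma new_pairs:
  obtains a b c d where "xs = [a, b]" "ys = [c, d]"
    "(a = (e1, True) \<and> b = (e2, False)) \<or> (a = (e2, False) \<and> b = (e1, True))"
    "(c = (e1, False) \<and> d = (e2, True)) \<or> (c = (e2, True) \<and> d = (e1, False))"
  using xs ys by blast

lemma arr_new: "arr (xs @ u @ ys @ v) = insert e1 (insert e2 (arr (u @ v)))"
  unfolding arr_def using xs ys by auto

lemma nu_term_old_arrow:
  assumes g: "g \<in> arr (u @ v)"
  shows "nu_term (xs @ u @ ys @ v) g = nu_term (u @ v) g"
proof -
  let ?w = "u @ v" and ?w' = "xs @ u @ ys @ v"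
  obtain a b c d where xsd: "xs = [a, b]" and ysd: "ys = [c, d]"
    and abd: "(a = (e1, True) \<and> b = (e2, False)) \<or> (a = (e2, False) \<and> b = (e1, True))"
    and cdd: "(c = (e1, False) \<and> d = (e2, True)) \<or> (c = (e2, True) \<and> d = (e1, False))"
    by (rule new_pairs)
  have gs: "(g, True) \<in> set ?w" "(g, False) \<in> set ?w"
    using g vstring_both_ends[OF vstring_old, of g True] unfolding arr_def by auto
  \<comment> \<open>The letters of each new pair are adjacent, so no old arc separates them.\<close>
  have "between ?w' x y a = between ?w' x y b" "between ?w' x y c = between ?w' x y d"
    if "x \<in> set ?w" "y \<in> set ?w" for x y
    using between_adjacent[of "[]" a b "u @ ys @ v" x y] between_adjacent[of "xs @ u" c d v x y]
      distinct_new that xsd ysd by auto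
  then have same: "in_sub1 ?w' g e1 = in_sub1 ?w' g e2" "in_sub2 ?w' g e1 = in_sub2 ?w' g e2"
    unfolding in_sub1_def in_sub2_def using gs abd cdd by auto
  have "filter (\<lambda>(h, b). h \<noteq> e1 \<and> h \<noteq> e2) u = u"
    "filter (\<lambda>(h, b). h \<noteq> e1 \<and> h \<noteq> e2) v = v"
    using old_arrow by (auto intro!: filter_True)
  then have filt: "?w = filter (\<lambda>(h, b). h \<noteq> e1 \<and> h \<noteq> e2) ?w'"
    using xs ys by auto
  have old_u: "\<And>h b. (h, b) \<in> set u \<Longrightarrow> h \<noteq> e1 \<and> h \<noteq> e2"
    and old_v: "\<And>h b. (h, b) \<in> set v \<Longrightarrow> h \<noteq> e1 \<and> h \<noteq> e2" using old_arrow by auto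
  note sub_eq = sub_eq_filter_old[OF vstring_new filt g]
  let ?P1 = "\<lambda>(h, b). in_sub1 ?w g h" and ?P2 = "\<lambda>(h, b). in_sub2 ?w g h"
  have s1: "sub1 ?w' g = (if in_sub1 ?w' g e1 then xs else []) @ filter ?P1 u @
      (if in_sub1 ?w' g e1 then ys else []) @ filter ?P1 v"
  proof -
    have "sub1 ?w' g = filter (\<lambda>(h, b). if h \<noteq> e1 \<and> h \<noteq> e2 then in_sub1 ?w g h else in_sub1 ?w' g h) xs @
        filter ?P1 u @ filter (\<lambda>(h, b). if h \<noteq> e1 \<and> h \<noteq> e2 then in_sub1 ?w g h else in_sub1 ?w' g h) ys @
        filter ?P1 v"
      by (simp only: sub_eq filter_append filter_if_all_True[OF old_u] filter_if_all_True[OF old_v])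
    then show ?thesis using xs ys same ne by auto
  qed
  have s2: "sub2 ?w' g = (if in_sub2 ?w' g e1 then xs else []) @ filter ?P2 u @
      (if in_sub2 ?w' g e1 then ys else []) @ filter ?P2 v"
  proof -
    have "sub2 ?w' g = filter (\<lambda>(h, b). if h \<noteq> e1 \<and> h \<noteq> e2 then in_sub2 ?w g h else in_sub2 ?w' g h) xs @
        filter ?P2 u @ filter (\<lambda>(h, b). if h \<noteq> e1 \<and> h \<noteq> e2 then in_sub2 ?w g h else in_sub2 ?w' g h) ys @
        filter ?P2 v"
      by (simp only: sub_eq filter_append filter_if_all_True[OF old_u] filter_if_all_True[OF old_v])
    then show ?thesis using xs ys same ne by auto
  qed
  have "homotopic (xs @ filter (\<lambda>(h, b). K h) u @ ys @ filter (\<lambda>(h, b). K h) v)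
      (filter (\<lambda>(h, b). K h) u @ filter (\<lambda>(h, b). K h) v)" for K
    by (rule homotopic_move_b_inv[OF _ _ _ ne xs ys])
      (use vstring_filter[OF vstring_old, of K] fresh1 fresh2 in auto)
  note move = this[of "in_sub1 ?w g"] this[of "in_sub2 ?w g"]
  show ?thesis
  proof (rule nu_term_homotopic)
    show "homotopic (sub1 ?w' g) (sub1 ?w g)"
      unfolding s1 unfolding sub1_eq_filter filter_append using move homotopic_refl by simp
    show "homotopic (sub2 ?w' g) (sub2 ?w g)"
      unfolding s2 unfolding sub2_eq_filter filter_append using move homotopic_refl by simp
  qed
qed

lemma in_sub_new_arrows:
  assumes h: "(h, b) \<in> set (u @ v)"
  shows "in_sub1 (xs @ u @ ys @ v) e1 h = both_ends_in u h \<and> in_sub2 (xs @ u @ ys @ v) e1 h = both_ends_in v h \<and>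
    in_sub1 (xs @ u @ ys @ v) e2 h = both_ends_in v h \<and> in_sub2 (xs @ u @ ys @ v) e2 h = both_ends_in u h"
proof -
  let ?w' = "xs @ u @ ys @ v" and ?n = "length u"
  obtain a b c d where xsd: "xs = [a, b]" and ysd: "ys = [c, d]"
    and abd: "(a = (e1, True) \<and> b = (e2, False)) \<or> (a = (e2, False) \<and> b = (e1, True))"
    and cdd: "(c = (e1, False) \<and> d = (e2, True)) \<or> (c = (e2, True) \<and> d = (e1, False))"
    by (rule new_pairs)
  have w': "?w' = [a, b] @ u @ [c, d] @ v" using xsd ysd by simp
  note p = pos_two_pairs[OF distinct_new[unfolded w'], folded w']
  have pe: "pos ?w' (e1, True) \<le> 1" "?n + 2 \<le> pos ?w' (e1, False)" "pos ?w' (e1, False) \<le> ?n + 3"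
    "?n + 2 \<le> pos ?w' (e2, True)" "pos ?w' (e2, True) \<le> ?n + 3" "pos ?w' (e2, False) \<le> 1"
    using abd cdd p by auto
  have pz: "(z \<in> set u \<and> 2 \<le> pos ?w' z \<and> pos ?w' z < ?n + 2) \<or> (z \<in> set v \<and> ?n + 4 \<le> pos ?w' z)"
    if "z \<in> set (u @ v)" for z
    using that p(5,6)[of z] pos_less_length[of u z] distinct_old by auto
  have pzu: "(pos ?w' z < ?n + 2) = (z \<in> set u)" "(?n + 4 \<le> pos ?w' z) = (z \<in> set v)"
    if "z \<in> set (u @ v)" for z
    using pz[OF that] distinct_old by auto
  have hs: "(h, True) \<in> set (u @ v)" "(h, False) \<in> set (u @ v)"
    using vstring_both_ends[OF vstring_old h] by auto
  have "(2 \<le> pos ?w' (h, x) \<and> pos ?w' (h, x) < ?n + 2) \<or> ?n + 4 \<le> pos ?w' (h, x)" for x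
    using pz[of "(h, x)"] hs by (cases x) auto
  note arcs = in_arc_two_blocks[OF this]
  show ?thesis unfolding in_sub1_def in_sub2_def between_def both_ends_in_def
    using arcs(1)[OF pe(1-3)] arcs(2)[OF pe(1-3)] arcs(2)[OF pe(6,4,5)] arcs(1)[OF pe(6,4,5)]
      pzu[OF hs(1)] pzu[OF hs(2)]
    by simp
qed

lemma filter_new_word:
  assumes "\<And>h b. (h, b) \<in> set u \<Longrightarrow> P h = Q h" and "\<And>h b. (h, b) \<in> set v \<Longrightarrow> P h = R h"
  shows "filter (\<lambda>(h, b). P h) (xs @ u @ ys @ v) =
    filter (\<lambda>(h, b). (h = e1 \<and> P e1) \<or> (h = e2 \<and> P e2)) xs @ filter (\<lambda>(h, b). Q h) u @
    filter (\<lambda>(h, b). (h = e1 \<and> P e1) \<or> (h = e2 \<and> P e2)) ys @ filter (\<lambda>(h, b). R h) v"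
proof -
  have "filter (\<lambda>(h, b). P h) xs = filter (\<lambda>(h, b). (h = e1 \<and> P e1) \<or> (h = e2 \<and> P e2)) xs"
    "filter (\<lambda>(h, b). P h) ys = filter (\<lambda>(h, b). (h = e1 \<and> P e1) \<or> (h = e2 \<and> P e2)) ys"
    using xs ys ne by auto
  moreover have "filter (\<lambda>(h, b). P h) u = filter (\<lambda>(h, b). Q h) u"
    "filter (\<lambda>(h, b). P h) v = filter (\<lambda>(h, b). R h) v"
    by (rule filter_cong; use assms in auto)+
  ultimately show ?thesis by simp
qed

lemma sub_new_arrows:
  defines "w' \<equiv> xs @ u @ ys @ v"
    and "U \<equiv> filter (\<lambda>(h, b). both_ends_in u h) u" and "V \<equiv> filter (\<lambda>(h, b). both_ends_in v h) v"
  shows "sub1 w' e1 = filter (\<lambda>(h, b). h = e2 \<and> in_sub1 w' e1 e2) xs @ U @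
      filter (\<lambda>(h, b). h = e2 \<and> in_sub1 w' e1 e2) ys"
    and "sub2 w' e1 = filter (\<lambda>(h, b). h = e2 \<and> in_sub2 w' e1 e2) xs @
      filter (\<lambda>(h, b). h = e2 \<and> in_sub2 w' e1 e2) ys @ V"
    and "sub1 w' e2 = filter (\<lambda>(h, b). h = e1 \<and> in_sub1 w' e2 e1) xs @
      filter (\<lambda>(h, b). h = e1 \<and> in_sub1 w' e2 e1) ys @ V"
    and "sub2 w' e2 = filter (\<lambda>(h, b). h = e1 \<and> in_sub2 w' e2 e1) xs @ U @
      filter (\<lambda>(h, b). h = e1 \<and> in_sub2 w' e2 e1) ys"
proof -
  have new: "in_sub1 w' e1 h = both_ends_in u h \<and> in_sub2 w' e1 h = both_ends_in v h \<and>
      in_sub1 w' e2 h = both_ends_in v h \<and> in_sub2 w' e2 h = both_ends_in u h"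
    if "(h, b) \<in> set (u @ v)" for h b
    using in_sub_new_arrows[OF that] unfolding w'_def .
  have u_only: "\<not> both_ends_in u h" if "(h, b) \<in> set v" for h b
    using that distinct_old unfolding both_ends_in_def by (cases b) auto
  have v_only: "\<not> both_ends_in v h" if "(h, b) \<in> set u" for h b
    using that distinct_old unfolding both_ends_in_def by (cases b) auto
  show "sub1 w' e1 = filter (\<lambda>(h, b). h = e2 \<and> in_sub1 w' e1 e2) xs @ U @
      filter (\<lambda>(h, b). h = e2 \<and> in_sub1 w' e1 e2) ys"
    unfolding sub1_eq_filter U_def w'_def
    using filter_new_word[of "in_sub1 w' e1" "both_ends_in u" "\<lambda>_. False"] new u_only not_in_sub1_self
    by (auto simp: w'_def)
  show "sub2 w' e1 = filter (\<lambda>(h, b). h = e2 \<and> in_sub2 w' e1 e2) xs @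
      filter (\<lambda>(h, b). h = e2 \<and> in_sub2 w' e1 e2) ys @ V"
    unfolding sub2_eq_filter V_def w'_def
    using filter_new_word[of "in_sub2 w' e1" "\<lambda>_. False" "both_ends_in v"] new v_only not_in_sub2_self
    by (auto simp: w'_def)
  show "sub1 w' e2 = filter (\<lambda>(h, b). h = e1 \<and> in_sub1 w' e2 e1) xs @
      filter (\<lambda>(h, b). h = e1 \<and> in_sub1 w' e2 e1) ys @ V"
    unfolding sub1_eq_filter V_def w'_def
    using filter_new_word[of "in_sub1 w' e2" "\<lambda>_. False" "both_ends_in v"] new v_only not_in_sub1_self
    by (auto simp: w'_def)
  show "sub2 w' e2 = filter (\<lambda>(h, b). h = e1 \<and> in_sub2 w' e2 e1) xs @ U @
      filter (\<lambda>(h, b). h = e1 \<and> in_sub2 w' e2 e1) ys"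
    unfolding sub2_eq_filter U_def w'_def
    using filter_new_word[of "in_sub2 w' e2" "both_ends_in u" "\<lambda>_. False"] new u_only not_in_sub2_self
    by (auto simp: w'_def)
qed

lemma nu_term_new_arrows_cancel:
  "(\<lambda>zs. nu_term (xs @ u @ ys @ v) e1 zs + nu_term (xs @ u @ ys @ v) e2 zs) = (\<lambda>_. 0)"
proof -
  let ?w' = "xs @ u @ ys @ v" and ?n = "length u"
  define U where "U = filter (\<lambda>(h, b). both_ends_in u h) u"
  define V where "V = filter (\<lambda>(h, b). both_ends_in v h) v"
  note subs = sub_new_arrows[folded U_def V_def]
  have "\<not> both_ends_in u h" if "(h, b) \<in> set v" for h b
    using that distinct_old unfolding both_ends_in_def by (cases b) auto
  moreover have "\<not> both_ends_in v h" if "(h, b) \<in> set u" for h b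
    using that distinct_old unfolding both_ends_in_def by (cases b) auto
  ultimately have U: "U = filter (\<lambda>(h, b). both_ends_in u h) (u @ v)"
    and V: "V = filter (\<lambda>(h, b). both_ends_in v h) (u @ v)"
    unfolding U_def V_def by (auto simp: filter_empty_conv)
  have vU: "vstring U" and vV: "vstring V"
    unfolding U V by (rule vstring_filter[OF vstring_old])+
  have fU: "e1 \<notin> fst ` set U" "e2 \<notin> fst ` set U" and fV: "e1 \<notin> fst ` set V"
    "e2 \<notin> fst ` set V"
    unfolding U_def V_def using fresh1 fresh2 by auto
  have hU: "homotopic U ([(e1, True)] @ U @ [(e1, False)])" "homotopic ([(e2, False)] @ U @ [(e2, True)]) U"
    using homotopic_del_enclosing_arrow[OF vU fU(1)] homotopic_del_enclosing_reverse_arrow[OF vU fU(2)]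
      homotopic_sym by blast+
  have hV: "homotopic ([(e2, False), (e2, True)] @ V) V" "homotopic V ([(e1, True), (e1, False)] @ V)"
    using homotopic_del_reverse_kink[of "[]" V e2] homotopic_del_kink[of "[]" V e1] vV fV homotopic_sym
    by simp_all
  obtain a b c d where xsd: "xs = [a, b]" and ysd: "ys = [c, d]" by (rule new_pairs)
  have p: "pos ?w' a = 0" "pos ?w' b = 1" "pos ?w' c = ?n + 2" "pos ?w' d = ?n + 3"
    using pos_two_pairs[of a b u c d v] distinct_new xsd ysd by auto
  consider "xs = [(e1, True), (e2, False)]" "ys = [(e1, False), (e2, True)]"
    | "xs = [(e2, False), (e1, True)]" "ys = [(e1, False), (e2, True)]"
    | "xs = [(e1, True), (e2, False)]" "ys = [(e2, True), (e1, False)]"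
    | "xs = [(e2, False), (e1, True)]" "ys = [(e2, True), (e1, False)]"
    using xs ys by blast
  then show ?thesis
  proof cases
    case 1
    then have "\<not> in_sub1 ?w' e1 e2" "\<not> in_sub2 ?w' e1 e2" "\<not> in_sub1 ?w' e2 e1"
      "\<not> in_sub2 ?w' e2 e1"
      using p xsd ysd ne unfolding in_sub1_def in_sub2_def between_def by (auto simp: in_arc_def)
    then have "homotopic (sub1 ?w' e1) (sub2 ?w' e2)" "homotopic (sub2 ?w' e1) (sub1 ?w' e2)"
      unfolding subs using 1 ne homotopic_refl by auto
    then show ?thesis by (rule nu_term_swap_cancel)
  next
    case 2
    then have "\<not> in_sub1 ?w' e1 e2" "in_sub2 ?w' e1 e2" "\<not> in_sub1 ?w' e2 e1" "in_sub2 ?w' e2 e1"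
      using p xsd ysd ne unfolding in_sub1_def in_sub2_def between_def by (auto simp: in_arc_def)
    then have "homotopic (sub1 ?w' e1) (sub2 ?w' e2)" "homotopic (sub2 ?w' e1) (sub1 ?w' e2)"
      unfolding subs using 2 ne hU(1) hV(1) by auto
    then show ?thesis by (rule nu_term_swap_cancel)
  next
    case 3
    then have "in_sub1 ?w' e1 e2" "\<not> in_sub2 ?w' e1 e2" "in_sub1 ?w' e2 e1" "\<not> in_sub2 ?w' e2 e1"
      using p xsd ysd ne unfolding in_sub1_def in_sub2_def between_def by (auto simp: in_arc_def)
    then have "homotopic (sub1 ?w' e1) (sub2 ?w' e2)" "homotopic (sub2 ?w' e1) (sub1 ?w' e2)"
      unfolding subs using 3 ne hU(2) hV(2) homotopic_refl by auto
    then show ?thesis by (rule nu_term_swap_cancel)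
  next
    case 4
    then have "\<not> in_sub1 ?w' e1 e2" "\<not> in_sub2 ?w' e1 e2" "\<not> in_sub1 ?w' e2 e1"
      "\<not> in_sub2 ?w' e2 e1"
      using p xsd ysd ne unfolding in_sub1_def in_sub2_def between_def by (auto simp: in_arc_def)
    then have "homotopic (sub1 ?w' e1) (sub2 ?w' e2)" "homotopic (sub2 ?w' e1) (sub1 ?w' e2)"
      unfolding subs using 4 ne homotopic_refl by auto
    then show ?thesis by (rule nu_term_swap_cancel)
  qed
qed

lemma nu_gen_move_b: "(nu_gen (xs @ u @ ys @ v) :: ('r::comm_ring_1) tensor) = nu_gen (u @ v)"
proof -
  have fresh: "e1 \<notin> arr (u @ v)" "e2 \<notin> arr (u @ v)"
    unfolding arr_def using fresh_notin[OF fresh1] fresh_notin[OF fresh2] by auto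
  have old: "(\<Sum>g\<in>arr (u @ v). nu_term (xs @ u @ ys @ v) g zs) = (\<Sum>g\<in>arr (u @ v). (nu_term (u @ v) g zs :: 'r))"
    for zs by (intro sum.cong) (simp_all add: nu_term_old_arrow)
  have new: "nu_term (xs @ u @ ys @ v) e1 zs + nu_term (xs @ u @ ys @ v) e2 zs = (0::'r)" for zs
    using fun_cong[OF nu_term_new_arrows_cancel, of zs] by simp
  show ?thesis
    unfolding nu_gen_eq_sum_nu_term arr_new
    using fresh ne finite_arr old new by (simp add: add.assoc[symmetric])
qed

end


lemma pos_three_pairs:
  assumes d: "distinct ([a0, a1] @ u @ [b0, b1] @ v @ [c0, c1] @ x)"
  defines "W \<equiv> [a0, a1] @ u @ [b0, b1] @ v @ [c0, c1] @ x"
  shows "pos W a0 = 0" "pos W a1 = 1"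
    "pos W b0 = length u + 2" "pos W b1 = length u + 3"
    "pos W c0 = length u + length v + 4" "pos W c1 = length u + length v + 5"
    "z \<in> set u \<Longrightarrow> pos W z = 2 + pos u z"
    "z \<in> set v \<Longrightarrow> pos W z = length u + 4 + pos v z"
    "z \<in> set x \<Longrightarrow> pos W z = length u + length v + 6 + pos x z"
  unfolding W_def
  by (rule pos_eq; use d pos_spec[of u z] pos_spec[of v z] pos_spec[of x z] in \<open>auto simp: nth_append\<close>)+

definition in_segments :: "nat \<Rightarrow> nat \<Rightarrow> nat \<Rightarrow> bool" where
  "in_segments n m k \<longleftrightarrow> (2 \<le> k \<and> k < n + 2) \<or> (n + 4 \<le> k \<and> k < n + m + 4) \<or> n + m + 6 \<le> k"

lemma pos_three_pairs_segments:
  assumes d: "distinct ([a0, a1] @ u @ [b0, b1] @ v @ [c0, c1] @ x)"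
    and z: "z \<in> set (u @ v @ x)"
  shows "in_segments (length u) (length v) (pos ([a0, a1] @ u @ [b0, b1] @ v @ [c0, c1] @ x) z)"
    "(pos ([a0, a1] @ u @ [b0, b1] @ v @ [c0, c1] @ x) z < length u + 2) = (z \<in> set u)"
    "(length u + 4 \<le> pos ([a0, a1] @ u @ [b0, b1] @ v @ [c0, c1] @ x) z \<and>
      pos ([a0, a1] @ u @ [b0, b1] @ v @ [c0, c1] @ x) z < length u + length v + 4) = (z \<in> set v)"
    "(length u + length v + 6 \<le> pos ([a0, a1] @ u @ [b0, b1] @ v @ [c0, c1] @ x) z) = (z \<in> set x)"
proof -
  have du: "distinct u" "distinct v" "distinct x" "set u \<inter> set v = {}" "set u \<inter> set x = {}"
    "set v \<inter> set x = {}"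
    using d by auto
  note p = pos_three_pairs[OF d]
  have "z \<in> set u \<or> z \<in> set v \<or> z \<in> set x" using z by auto
  then show "in_segments (length u) (length v) (pos ([a0, a1] @ u @ [b0, b1] @ v @ [c0, c1] @ x) z)"
    "(pos ([a0, a1] @ u @ [b0, b1] @ v @ [c0, c1] @ x) z < length u + 2) = (z \<in> set u)"
    "(length u + 4 \<le> pos ([a0, a1] @ u @ [b0, b1] @ v @ [c0, c1] @ x) z \<and>
      pos ([a0, a1] @ u @ [b0, b1] @ v @ [c0, c1] @ x) z < length u + length v + 4) = (z \<in> set v)"
    "(length u + length v + 6 \<le> pos ([a0, a1] @ u @ [b0, b1] @ v @ [c0, c1] @ x) z) = (z \<in> set x)"
    using p(7)[of z] p(8)[of z] p(9)[of z] pos_less_length[OF du(1), of z] pos_less_length[OF du(2), of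
      z] du(4-6)
    unfolding in_segments_def by auto
qed

lemma in_arc_Suc_eq: "P \<noteq> s \<Longrightarrow> P \<noteq> Suc s \<Longrightarrow> Q \<noteq> s \<Longrightarrow> Q \<noteq> Suc s \<Longrightarrow>
  in_arc P Q (Suc s) = in_arc P Q s"
  unfolding in_arc_def by auto

lemma in_arc_slots_12: "t \<le> 1 \<Longrightarrow> n + 2 \<le> hh \<Longrightarrow> hh \<le> n + 3 \<Longrightarrow> in_segments n m k \<Longrightarrow> in_arc t hh k = (k < n + 2)"
  unfolding in_arc_def in_segments_def by auto
lemma in_arc_slots_21: "t \<le> 1 \<Longrightarrow> n + 2 \<le> hh \<Longrightarrow> hh \<le> n + 3 \<Longrightarrow> in_segments n m k \<Longrightarrow> in_arc hh t k = (\<not> k < n + 2)"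
  unfolding in_arc_def in_segments_def by auto
lemma in_arc_slots_23: "n + 2 \<le> t \<Longrightarrow> t \<le> n + 3 \<Longrightarrow> n + m + 4 \<le> hh \<Longrightarrow> hh \<le> n + m + 5 \<Longrightarrow> in_segments n m k \<Longrightarrow>
  in_arc t hh k = (n + 4 \<le> k \<and> k < n + m + 4)"
  unfolding in_arc_def in_segments_def by auto
lemma in_arc_slots_32: "n + 2 \<le> t \<Longrightarrow> t \<le> n + 3 \<Longrightarrow> n + m + 4 \<le> hh \<Longrightarrow> hh \<le> n + m + 5 \<Longrightarrow> in_segments n m k \<Longrightarrow>
  in_arc hh t k = (\<not> (n + 4 \<le> k \<and> k < n + m + 4))"
  unfolding in_arc_def in_segments_def by auto
lemma in_arc_slots_31: "t \<le> 1 \<Longrightarrow> n + m + 4 \<le> hh \<Longrightarrow> hh \<le> n + m + 5 \<Longrightarrow> in_segments n m k \<Longrightarrow>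
  in_arc hh t k = (n + m + 6 \<le> k)"
  unfolding in_arc_def in_segments_def by auto
lemma in_arc_slots_13: "t \<le> 1 \<Longrightarrow> n + m + 4 \<le> hh \<Longrightarrow> hh \<le> n + m + 5 \<Longrightarrow> in_segments n m k \<Longrightarrow>
  in_arc t hh k = (\<not> n + m + 6 \<le> k)"
  unfolding in_arc_def in_segments_def by auto

locale three_pairs =
  fixes a0 a1 b0 b1 c0 c1 :: "nat \<times> bool" and u v x :: vword
  assumes d: "distinct ([a0, a1] @ u @ [b0, b1] @ v @ [c0, c1] @ x)"
begin

abbreviation "W \<equiv> [a0, a1] @ u @ [b0, b1] @ v @ [c0, c1] @ x"
abbreviation "Lo \<equiv> u @ v @ x"
abbreviation "n \<equiv> length u"
abbreviation "m \<equiv> length v"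

lemma old_arrow_segments:
  assumes h: "both_ends_in Lo h"
  shows "in_segments n m (pos W (h, True))" "in_segments n m (pos W (h, False))"
    "(pos W (h, True) < n + 2 \<and> pos W (h, False) < n + 2) = both_ends_in u h"
    "(\<not> pos W (h, True) < n + 2 \<and> \<not> pos W (h, False) < n + 2) = both_ends_out u Lo h"
    "((n + 4 \<le> pos W (h, True) \<and> pos W (h, True) < n + m + 4) \<and> (n + 4 \<le> pos W (h, False) \<and> pos W (h,
      False) < n + m + 4)) = both_ends_in v h"
    "(\<not> (n + 4 \<le> pos W (h, True) \<and> pos W (h, True) < n + m + 4) \<and> \<not> (n + 4 \<le> pos W (h, False) \<and> pos W
      (h, False) < n + m + 4)) = both_ends_out v Lo h"
    "(n + m + 6 \<le> pos W (h, True) \<and> n + m + 6 \<le> pos W (h, False)) = both_ends_in x h"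
    "(\<not> n + m + 6 \<le> pos W (h, True) \<and> \<not> n + m + 6 \<le> pos W (h, False)) = both_ends_out x Lo h"
  using pos_three_pairs_segments[OF d, of "(h, True)"] pos_three_pairs_segments[OF d, of "(h, False)"] h
    unfolding both_ends_in_def both_ends_out_def
  by auto

lemma in_sub_segments:
  assumes h: "both_ends_in Lo h"
    and t: "pos W (E, True) = t" and hh: "pos W (E, False) = hh"
  shows "t \<le> 1 \<Longrightarrow> n + 2 \<le> hh \<Longrightarrow> hh \<le> n + 3 \<Longrightarrow> in_sub1 W E h = both_ends_in u h \<and> in_sub2 W E h =
    both_ends_out u Lo h"
    "hh \<le> 1 \<Longrightarrow> n + 2 \<le> t \<Longrightarrow> t \<le> n + 3 \<Longrightarrow> in_sub2 W E h = both_ends_in u h \<and> in_sub1 W E h = both_ends_out u Lo h"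
    "n + 2 \<le> t \<Longrightarrow> t \<le> n + 3 \<Longrightarrow> n + m + 4 \<le> hh \<Longrightarrow> hh \<le> n + m + 5 \<Longrightarrow> in_sub1 W E h = both_ends_in v h \<and>
      in_sub2 W E h = both_ends_out v Lo h"
    "n + 2 \<le> hh \<Longrightarrow> hh \<le> n + 3 \<Longrightarrow> n + m + 4 \<le> t \<Longrightarrow> t \<le> n + m + 5 \<Longrightarrow> in_sub2 W E h = both_ends_in v h \<and>
      in_sub1 W E h = both_ends_out v Lo h"
    "hh \<le> 1 \<Longrightarrow> n + m + 4 \<le> t \<Longrightarrow> t \<le> n + m + 5 \<Longrightarrow> in_sub1 W E h = both_ends_in x h \<and> in_sub2 W E h =
      both_ends_out x Lo h"
    "t \<le> 1 \<Longrightarrow> n + m + 4 \<le> hh \<Longrightarrow> hh \<le> n + m + 5 \<Longrightarrow> in_sub2 W E h = both_ends_in x h \<and> in_sub1 W E h =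
      both_ends_out x Lo h"
proof -
  note r = old_arrow_segments[OF h]
  show "t \<le> 1 \<Longrightarrow> n + 2 \<le> hh \<Longrightarrow> hh \<le> n + 3 \<Longrightarrow> in_sub1 W E h = both_ends_in u h \<and> in_sub2 W E h =
    both_ends_out u Lo h"
    unfolding in_sub1_def in_sub2_def between_def t hh using r in_arc_slots_12[OF _ _ _ r(1)]
      in_arc_slots_12[OF _ _ _ r(2)]
      in_arc_slots_21[OF _ _ _ r(1)] in_arc_slots_21[OF _ _ _ r(2)] by simp
  show "hh \<le> 1 \<Longrightarrow> n + 2 \<le> t \<Longrightarrow> t \<le> n + 3 \<Longrightarrow> in_sub2 W E h = both_ends_in u h \<and> in_sub1 W E h = both_ends_out u Lo h"
    unfolding in_sub1_def in_sub2_def between_def t hh using r in_arc_slots_12[OF _ _ _ r(1)]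
      in_arc_slots_12[OF _ _ _ r(2)]
      in_arc_slots_21[OF _ _ _ r(1)] in_arc_slots_21[OF _ _ _ r(2)] by simp
  show "n + 2 \<le> t \<Longrightarrow> t \<le> n + 3 \<Longrightarrow> n + m + 4 \<le> hh \<Longrightarrow> hh \<le> n + m + 5 \<Longrightarrow> in_sub1 W E h = both_ends_in v h \<and>
    in_sub2 W E h = both_ends_out v Lo h"
    unfolding in_sub1_def in_sub2_def between_def t hh using r in_arc_slots_23[OF _ _ _ _ r(1)]
      in_arc_slots_23[OF _ _ _ _ r(2)]
      in_arc_slots_32[OF _ _ _ _ r(1)] in_arc_slots_32[OF _ _ _ _ r(2)] by simp
  show "n + 2 \<le> hh \<Longrightarrow> hh \<le> n + 3 \<Longrightarrow> n + m + 4 \<le> t \<Longrightarrow> t \<le> n + m + 5 \<Longrightarrow> in_sub2 W E h = both_ends_in v h \<and>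
    in_sub1 W E h = both_ends_out v Lo h"
    unfolding in_sub1_def in_sub2_def between_def t hh using r in_arc_slots_23[OF _ _ _ _ r(1)]
      in_arc_slots_23[OF _ _ _ _ r(2)]
      in_arc_slots_32[OF _ _ _ _ r(1)] in_arc_slots_32[OF _ _ _ _ r(2)] by simp
  show "hh \<le> 1 \<Longrightarrow> n + m + 4 \<le> t \<Longrightarrow> t \<le> n + m + 5 \<Longrightarrow> in_sub1 W E h = both_ends_in x h \<and> in_sub2 W E h =
    both_ends_out x Lo h"
    unfolding in_sub1_def in_sub2_def between_def t hh using r in_arc_slots_31[OF _ _ _ r(1)]
      in_arc_slots_31[OF _ _ _ r(2)]
      in_arc_slots_13[OF _ _ _ r(1)] in_arc_slots_13[OF _ _ _ r(2)] by simp
  show "t \<le> 1 \<Longrightarrow> n + m + 4 \<le> hh \<Longrightarrow> hh \<le> n + m + 5 \<Longrightarrow> in_sub2 W E h = both_ends_in x h \<and> in_sub1 W E h =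
    both_ends_out x Lo h"
    unfolding in_sub1_def in_sub2_def between_def t hh using r in_arc_slots_31[OF _ _ _ r(1)]
      in_arc_slots_31[OF _ _ _ r(2)]
      in_arc_slots_13[OF _ _ _ r(1)] in_arc_slots_13[OF _ _ _ r(2)] by simp
qed

abbreviation "W' \<equiv> [a1, a0] @ u @ [b1, b0] @ v @ [c1, c0] @ x"

lemma distinct_W': "distinct W'" using d by auto

lemma pos_W'_old: assumes z: "z \<in> set Lo" shows "pos W' z = pos W z"
proof -
  have "z \<in> set u \<or> z \<in> set v \<or> z \<in> set x" using z by auto
  then show ?thesis
  proof (elim disjE)
    assume "z \<in> set u" then show ?thesis using pos_three_pairs(7)[OF distinct_W', of z]
      pos_three_pairs(7)[OF d, of z] by simp
  next
    assume "z \<in> set v" then show ?thesis using pos_three_pairs(8)[OF distinct_W', of z]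
      pos_three_pairs(8)[OF d, of z] by simp
  next
    assume "z \<in> set x" then show ?thesis using pos_three_pairs(9)[OF distinct_W', of z]
      pos_three_pairs(9)[OF d, of z] by simp
  qed
qed

lemma pos_W': "pos W' a1 = 0" "pos W' a0 = 1" "pos W' b1 = n + 2" "pos W' b0 = n + 3"
    "pos W' c1 = n + m + 4" "pos W' c0 = n + m + 5"
    "z \<in> set Lo \<Longrightarrow> pos W' z = pos W z"
  using pos_three_pairs[OF distinct_W'] pos_W'_old by auto

lemma pos_W: "pos W a0 = 0" "pos W a1 = 1" "pos W b0 = n + 2" "pos W b1 = n + 3"
    "pos W c0 = n + m + 4" "pos W c1 = n + m + 5"
  using pos_three_pairs[OF d] by auto

lemma in_arc_pair_slots:
  assumes P: "in_segments n m P" and Q: "in_segments n m Q"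
  shows "in_arc P Q (pos W a1) = in_arc P Q 0" "in_arc P Q (pos W a0) = in_arc P Q 0"
        "in_arc P Q (pos W' a1) = in_arc P Q 0" "in_arc P Q (pos W' a0) = in_arc P Q 0"
        "in_arc P Q (pos W b1) = in_arc P Q (n + 2)" "in_arc P Q (pos W b0) = in_arc P Q (n + 2)"
        "in_arc P Q (pos W' b1) = in_arc P Q (n + 2)" "in_arc P Q (pos W' b0) = in_arc P Q (n + 2)"
        "in_arc P Q (pos W c1) = in_arc P Q (n + m + 4)" "in_arc P Q (pos W c0) = in_arc P Q (n + m + 4)"
        "in_arc P Q (pos W' c1) = in_arc P Q (n + m + 4)" "in_arc P Q (pos W' c0) = in_arc P Q (n + m + 4)"
proof -
  have nP: "P \<noteq> 0" "P \<noteq> Suc 0" "P \<noteq> n + 2" "P \<noteq> Suc (n + 2)"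
    "P \<noteq> n + m + 4" "P \<noteq> Suc (n + m + 4)"
    using P unfolding in_segments_def by auto
  have nQ: "Q \<noteq> 0" "Q \<noteq> Suc 0" "Q \<noteq> n + 2" "Q \<noteq> Suc (n + 2)"
    "Q \<noteq> n + m + 4" "Q \<noteq> Suc (n + m + 4)"
    using Q unfolding in_segments_def by auto
  have k1: "in_arc P Q 1 = in_arc P Q 0" using in_arc_Suc_eq[of P 0 Q] nP nQ by simp
  have k2: "in_arc P Q (n + 3) = in_arc P Q (n + 2)" using in_arc_Suc_eq[of P "n + 2" Q] nP nQ
    by (simp add: numeral_3_eq_3 numeral_2_eq_2)
  have k3: "in_arc P Q (n + m + 5) = in_arc P Q (n + m + 4)" using in_arc_Suc_eq[of P "n + m + 4" Q] nP nQ
    by (simp add: eval_nat_numeral)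
  show "in_arc P Q (pos W a1) = in_arc P Q 0" "in_arc P Q (pos W a0) = in_arc P Q 0"
        "in_arc P Q (pos W' a1) = in_arc P Q 0" "in_arc P Q (pos W' a0) = in_arc P Q 0"
        "in_arc P Q (pos W b1) = in_arc P Q (n + 2)" "in_arc P Q (pos W b0) = in_arc P Q (n + 2)"
        "in_arc P Q (pos W' b1) = in_arc P Q (n + 2)" "in_arc P Q (pos W' b0) = in_arc P Q (n + 2)"
        "in_arc P Q (pos W c1) = in_arc P Q (n + m + 4)" "in_arc P Q (pos W c0) = in_arc P Q (n + m + 4)"
        "in_arc P Q (pos W' c1) = in_arc P Q (n + m + 4)" "in_arc P Q (pos W' c0) = in_arc P Q (n + m + 4)"
    using k1 k2 k3 pos_W pos_W' by simp_all
qed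

lemma in_arc_swapped_old:
  assumes g: "both_ends_in Lo g" and z: "z \<in> set W"
  shows "in_arc (pos W (g, True)) (pos W (g, False)) (pos W' z) = in_arc (pos W (g, True)) (pos W (g,
    False)) (pos W z)"
        "in_arc (pos W (g, False)) (pos W (g, True)) (pos W' z) = in_arc (pos W (g, False)) (pos W (g,
          True)) (pos W z)"
proof -
  note r = old_arrow_segments[OF g]
  have "z = a0 \<or> z = a1 \<or> z = b0 \<or> z = b1 \<or> z = c0 \<or> z = c1 \<or> z \<in> set Lo" using z by auto
  then show "in_arc (pos W (g, True)) (pos W (g, False)) (pos W' z) = in_arc (pos W (g, True)) (pos W
    (g, False)) (pos W z)"
        "in_arc (pos W (g, False)) (pos W (g, True)) (pos W' z) = in_arc (pos W (g, False)) (pos W (g,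
          True)) (pos W z)"
    by (elim disjE; simp only: in_arc_pair_slots[OF r(1) r(2)] in_arc_pair_slots[OF r(2) r(1)] pos_W'(7))+
qed

lemma in_sub_swapped_old:
  assumes g: "both_ends_in Lo g" and hz: "(h, True) \<in> set W" "(h, False) \<in> set W"
  shows "in_sub1 W' g h = in_sub1 W g h" "in_sub2 W' g h = in_sub2 W g h"
proof -
  have gW: "pos W' (g, True) = pos W (g, True)" "pos W' (g, False) = pos W (g, False)"
    using g pos_W'(7) unfolding both_ends_in_def by auto
  show "in_sub1 W' g h = in_sub1 W g h" "in_sub2 W' g h = in_sub2 W g h"
    unfolding in_sub1_def in_sub2_def between_def gW using in_arc_swapped_old[OF g hz(1)]
      in_arc_swapped_old[OF g hz(2)] by auto
qed

lemma filter_swapped_homotopic: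
  assumes vW: "vstring W"
    and all: "(F a0 \<and> F a1) \<or> (F b0 \<and> F b1) \<or> (F c0 \<and> F c1) \<Longrightarrow> F a0 \<and> F a1 \<and> F b0 \<and> F b1 \<and> F c0 \<and> F c1"
    and mv: "\<And>u' v' x'. vstring ([a0, a1] @ u' @ [b0, b1] @ v' @ [c0, c1] @ x') \<Longrightarrow>
       homotopic ([a0, a1] @ u' @ [b0, b1] @ v' @ [c0, c1] @ x') ([a1, a0] @ u' @ [b1, b0] @ v' @ [c1, c0] @ x')"
    and Fp: "F = (\<lambda>(h, b). G h)"
  shows "homotopic (filter F W) (filter F W')"
proof (cases "(F a0 \<and> F a1) \<or> (F b0 \<and> F b1) \<or> (F c0 \<and> F c1)")
  case True
  then have A: "F a0" "F a1" "F b0" "F b1" "F c0" "F c1" using all by auto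
  have vf: "vstring (filter F W)" using vstring_filter[OF vW, of G] Fp by simp
  show ?thesis using mv[of "filter F u" "filter F v" "filter F x"] vf A by simp
next
  case False
  then have "filter F W' = filter F W" by auto
  then show ?thesis by (simp add: homotopic_refl)
qed

lemma nu_term_swapped_old_arrow:
  fixes g :: nat
  defines "F1 \<equiv> \<lambda>(h, b). in_sub1 W g h" and "F2 \<equiv> \<lambda>(h, b). in_sub2 W g h"
  assumes vW: "vstring W" and g: "both_ends_in Lo g"
    and mv: "\<And>u' v' x'. vstring ([a0, a1] @ u' @ [b0, b1] @ v' @ [c0, c1] @ x') \<Longrightarrow>
       homotopic ([a0, a1] @ u' @ [b0, b1] @ v' @ [c0, c1] @ x') ([a1, a0] @ u' @ [b1, b0] @ v' @ [c1, c0] @ x')"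
    and all1: "(F1 a0 \<and> F1 a1) \<or> (F1 b0 \<and> F1 b1) \<or> (F1 c0 \<and> F1 c1) \<Longrightarrow>
      F1 a0 \<and> F1 a1 \<and> F1 b0 \<and> F1 b1 \<and> F1 c0 \<and> F1 c1"
    and all2: "(F2 a0 \<and> F2 a1) \<or> (F2 b0 \<and> F2 b1) \<or> (F2 c0 \<and> F2 c1) \<Longrightarrow>
      F2 a0 \<and> F2 a1 \<and> F2 b0 \<and> F2 b1 \<and> F2 c0 \<and> F2 c1"
  shows "nu_term W' g = nu_term W g"
proof -
  have o: "in_sub1 W' g h = in_sub1 W g h \<and> in_sub2 W' g h = in_sub2 W g h" if "(h, b) \<in> set W'" for h b
  proof -
    have "(h, b) \<in> set W" using that by auto
    then show ?thesis using in_sub_swapped_old[OF g] vstring_both_ends[OF vW] by blast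
  qed
  have s: "sub1 W' g = filter F1 W'" "sub2 W' g = filter F2 W'"
    unfolding sub1_eq_filter sub2_eq_filter F1_def F2_def
    by (rule filter_cong[OF refl], metis (mono_tags, lifting) case_prod_conv o surj_pair)+
  have h1: "homotopic (filter F1 W) (filter F1 W')"
    using filter_swapped_homotopic[OF vW all1 mv, where G = "in_sub1 W g"] by (simp add: F1_def)
  have h2: "homotopic (filter F2 W) (filter F2 W')"
    using filter_swapped_homotopic[OF vW all2 mv, where G = "in_sub2 W g"] by (simp add: F2_def)
  show ?thesis
  proof (rule nu_term_homotopic)
    show "homotopic (sub1 W' g) (sub1 W g)"
      unfolding s using homotopic_sym[OF h1] by (simp only: sub1_eq_filter F1_def)
    show "homotopic (sub2 W' g) (sub2 W g)"
      unfolding s using homotopic_sym[OF h2] by (simp only: sub2_eq_filter F2_def)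
  qed
qed

end

lemma filter_disj_disjoint:
  assumes "\<And>h b. (h, b) \<in> set L \<Longrightarrow> h \<notin> S"
  shows "filter (\<lambda>(h, b). R h \<or> h \<in> S) L = filter (\<lambda>(h, b). R h) L"
  by (rule filter_cong) (use assms in auto)

lemma filter_arrows_cong:
  assumes "\<And>h b. (h, b) \<in> set L \<Longrightarrow> P h = Q h"
  shows "filter (\<lambda>(h, b). P h) L = filter (\<lambda>(h, b). Q h) L"
  by (rule filter_cong) (use assms in auto)

lemma filter_both_ends_out_self: "filter (\<lambda>(h, b). both_ends_out L Lo h) L = []"
  unfolding both_ends_out_def filter_empty_conv
proof (clarify)
  fix a b assume "(a, b) \<in> set L" "(a, True) \<notin> set L" "(a, False) \<notin> set L"
  then show False by (cases b) auto
qed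
lemma sub1_eq_filter_split:
  assumes o1: "\<And>h b. (h, b) \<in> set X \<Longrightarrow> h \<notin> Sp \<Longrightarrow> in_sub1 X E h = R h"
    and s1: "\<And>h. h \<in> Sp \<Longrightarrow> in_sub1 X E h = (h \<in> S)" and nr: "\<And>h. h \<in> Sp \<Longrightarrow> \<not> R h"
    and sS: "S \<subseteq> Sp"
  shows "sub1 X E = filter (\<lambda>(h, b). R h \<or> h \<in> S) X"
  unfolding sub1_eq_filter
proof (rule filter_cong)
  fix z assume z: "z \<in> set X"
  obtain h b where zh: "z = (h, b)" by (cases z)
  show "(case z of (h, b) \<Rightarrow> in_sub1 X E h) = (case z of (h, b) \<Rightarrow> R h \<or> h \<in> S)"
    using o1[of h b] s1[of h] nr[of h] z zh sS by (cases "h \<in> Sp") auto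
qed simp

lemma sub2_eq_filter_split:
  assumes o1: "\<And>h b. (h, b) \<in> set X \<Longrightarrow> h \<notin> Sp \<Longrightarrow> in_sub2 X E h = R h"
    and s1: "\<And>h. h \<in> Sp \<Longrightarrow> in_sub2 X E h = (h \<in> S)" and nr: "\<And>h. h \<in> Sp \<Longrightarrow> \<not> R h"
    and sS: "S \<subseteq> Sp"
  shows "sub2 X E = filter (\<lambda>(h, b). R h \<or> h \<in> S) X"
  unfolding sub2_eq_filter
proof (rule filter_cong)
  fix z assume z: "z \<in> set X"
  obtain h b where zh: "z = (h, b)" by (cases z)
  show "(case z of (h, b) \<Rightarrow> in_sub2 X E h) = (case z of (h, b) \<Rightarrow> R h \<or> h \<in> S)"
    using o1[of h b] s1[of h] nr[of h] z zh sS by (cases "h \<in> Sp") auto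
qed simp

locale move_c = three_pairs +
  fixes e1 e2 e3 :: nat
  assumes vstring_W: "vstring W"
    and slots: "{a0, a1, b0, b1, c0, c1} = {(e1, True), (e1, False), (e2, True), (e2, False), (e3,
      True), (e3, False)}"
    and ne: "e1 \<noteq> e2" "e2 \<noteq> e3" "e1 \<noteq> e3"
begin

lemma slot_arrows: "fst ` {a0, a1, b0, b1, c0, c1} = {e1, e2, e3}"
  unfolding slots by auto

lemma old_arrow:
  assumes "(h, b) \<in> set Lo"
  shows "h \<noteq> e1 \<and> h \<noteq> e2 \<and> h \<noteq> e3"
proof -
  have "(h, b) \<notin> {a0, a1, b0, b1, c0, c1}" using d assms by auto
  then show ?thesis unfolding slots by (cases b) auto
qed

lemma both_ends_in_old:
  assumes "(h, b) \<in> set W \<or> (h, b) \<in> set W'" and "h \<notin> {e1, e2, e3}"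
  shows "both_ends_in Lo h"
proof -
  have "set W' = set W" by auto
  then have "(h, True) \<in> set W" "(h, False) \<in> set W"
    using vstring_both_ends[OF vstring_W] assms(1) by blast+
  moreover have "set W = {a0, a1, b0, b1, c0, c1} \<union> set Lo" by auto
  ultimately show ?thesis using assms(2) unfolding slots both_ends_in_def by auto
qed

lemma moved_not_both_ends:
  "h \<in> {e1, e2, e3} \<Longrightarrow> set L \<subseteq> set Lo \<Longrightarrow> \<not> both_ends_in L h \<and> \<not> both_ends_out L Lo h"
  using old_arrow unfolding both_ends_in_def both_ends_out_def by fastforce

lemma filter_disj_moved:
  "S \<subseteq> {e1, e2, e3} \<Longrightarrow> set L \<subseteq> set Lo \<Longrightarrow> filter (\<lambda>(h, b). R h \<or> h \<in> S) L = filter (\<lambda>(h, b). R h) L"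
  using filter_disj_disjoint[of L S R] old_arrow by blast

lemma fresh_filter: "E \<in> {e1, e2, e3} \<Longrightarrow> set L \<subseteq> set Lo \<Longrightarrow> E \<notin> fst ` set (filter P L)"
  using old_arrow by fastforce

lemma vstring_filter_Lo: "vstring (filter (\<lambda>(h, b). R h) u @ filter (\<lambda>(h, b). R h) v @ filter (\<lambda>(h, b). R h) x)"
proof -
  let ?P = "\<lambda>(h, b). R h \<and> h \<notin> {e1, e2, e3}"
  have fL: "filter ?P L = filter (\<lambda>(h, b). R h) L" if "set L \<subseteq> set Lo" for L
    by (rule filter_arrows_cong) (use old_arrow that in blast)
  have "set u \<subseteq> set Lo" "set v \<subseteq> set Lo" "set x \<subseteq> set Lo" by auto
  note fL = fL[OF this(1)] fL[OF this(2)] fL[OF this(3)]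
  have "\<not> ?P a0" "\<not> ?P a1" "\<not> ?P b0" "\<not> ?P b1" "\<not> ?P c0" "\<not> ?P c1"
    using slot_arrows by (auto simp: split_beta)
  then have "filter ?P W = filter (\<lambda>(h, b). R h) u @ filter (\<lambda>(h, b). R h) v @ filter (\<lambda>(h, b). R h) x"
    using fL by simp
  then show ?thesis using vstring_filter[OF vstring_W, of "\<lambda>h. R h \<and> h \<notin> {e1, e2, e3}"] by simp
qed

end

lemma sub_moved_arrows_c1:
  fixes e1 e2 e3 :: nat and u v x :: vword
  defines "W \<equiv> [(e3, False), (e1, True)] @ u @ [(e1, False), (e2, True)] @ v @ [(e2, False), (e3, True)] @ x"
    and "W' \<equiv> [(e1, True), (e3, False)] @ u @ [(e2, True), (e1, False)] @ v @ [(e3, True), (e2, False)] @ x"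
  assumes vW: "vstring W"
  shows
    "sub1 W e1 = filter (\<lambda>(h, b). both_ends_in u h \<or> h \<in> {}) W"
    "sub1 W' e1 = filter (\<lambda>(h, b). both_ends_in u h \<or> h \<in> {}) W'"
    "sub1 W e2 = filter (\<lambda>(h, b). both_ends_in v h \<or> h \<in> {}) W"
    "sub1 W' e2 = filter (\<lambda>(h, b). both_ends_in v h \<or> h \<in> {}) W'"
    "sub1 W e3 = filter (\<lambda>(h, b). both_ends_in x h \<or> h \<in> {}) W"
    "sub1 W' e3 = filter (\<lambda>(h, b). both_ends_in x h \<or> h \<in> {}) W'"
    "sub2 W e1 = filter (\<lambda>(h, b). both_ends_out u (u @ v @ x) h \<or> h \<in> {e2, e3}) W"
    "sub2 W' e1 = filter (\<lambda>(h, b). both_ends_out u (u @ v @ x) h \<or> h \<in> {}) W'"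
    "sub2 W e2 = filter (\<lambda>(h, b). both_ends_out v (u @ v @ x) h \<or> h \<in> {e1, e3}) W"
    "sub2 W' e2 = filter (\<lambda>(h, b). both_ends_out v (u @ v @ x) h \<or> h \<in> {}) W'"
    "sub2 W e3 = filter (\<lambda>(h, b). both_ends_out x (u @ v @ x) h \<or> h \<in> {e1, e2}) W"
    "sub2 W' e3 = filter (\<lambda>(h, b). both_ends_out x (u @ v @ x) h \<or> h \<in> {}) W'"
proof -
  have dW: "distinct W" using vW vstring_distinct by blast
  interpret A: move_c "(e3, False)" "(e1, True)" "(e1, False)" "(e2, True)" "(e2, False)"
    "(e3, True)" u v x e1 e2 e3
    using dW vW unfolding W_def by unfold_locales auto
  interpret B: three_pairs "(e1, True)" "(e3, False)" "(e2, True)" "(e1, False)" "(e3, True)"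
    "(e2, False)" u v x
    using A.distinct_W' unfolding W'_def by unfold_locales simp
  note ne = A.ne
  have pW: "pos W (e3, False) = 0" "pos W (e1, True) = 1" "pos W (e1, False) = length u + 2"
    "pos W (e2, True) = length u + 3" "pos W (e2, False) = length u + length v + 4"
    "pos W (e3, True) = length u + length v + 5"
    using A.pos_W unfolding W_def by simp_all
  have pW': "pos W' (e1, True) = 0" "pos W' (e3, False) = 1" "pos W' (e2, True) = length u + 2"
    "pos W' (e1, False) = length u + 3" "pos W' (e3, True) = length u + length v + 4"
    "pos W' (e2, False) = length u + length v + 5"
    using B.pos_W unfolding W'_def by simp_all
  let ?Lo = "u @ v @ x"
  let ?Sp = "{e1, e2, e3}"
  note rW1 = A.in_sub_segments(1)[of _ e1 1 "length u + 2"] and rW3 = A.in_sub_segments(3)[of _ e2 "length u + 3"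
    "length u + length v + 4"]
    and rW5 = A.in_sub_segments(5)[of _ e3 "length u + length v + 5" 0]
  note rV1 = B.in_sub_segments(1)[of _ e1 0 "length u + 3"] and rV3 = B.in_sub_segments(3)[of _ e2 "length u + 2"
    "length u + length v + 5"]
    and rV5 = B.in_sub_segments(5)[of _ e3 "length u + length v + 4" 1]
  have regW: "in_sub1 W e1 h = both_ends_in u h" "in_sub2 W e1 h = both_ends_out u ?Lo h"
    "in_sub1 W e2 h = both_ends_in v h" "in_sub2 W e2 h = both_ends_out v ?Lo h"
    "in_sub1 W e3 h = both_ends_in x h" "in_sub2 W e3 h = both_ends_out x ?Lo h" if "both_ends_in ?Lo h" for h
    using rW1[OF that] rW3[OF that] rW5[OF that] pW unfolding W_def by auto
  have regW': "in_sub1 W' e1 h = both_ends_in u h" "in_sub2 W' e1 h = both_ends_out u ?Lo h"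
    "in_sub1 W' e2 h = both_ends_in v h" "in_sub2 W' e2 h = both_ends_out v ?Lo h"
    "in_sub1 W' e3 h = both_ends_in x h"
    "in_sub2 W' e3 h = both_ends_out x ?Lo h" if "both_ends_in ?Lo h" for h
    using rV1[OF that] rV3[OF that] rV5[OF that] pW' unfolding W'_def by auto
  have spW: "in_sub1 W e1 h = (h \<in> {})" "in_sub1 W e2 h = (h \<in> {})" "in_sub1 W e3 h = (h \<in> {})"
    "in_sub2 W e1 h = (h \<in> {e2, e3})" "in_sub2 W e2 h = (h \<in> {e1, e3})"
    "in_sub2 W e3 h = (h \<in> {e1, e2})"
    if "h \<in> ?Sp" for h
    using that ne unfolding in_sub1_def in_sub2_def between_def by (auto simp: pW in_arc_def)
  have spW': "in_sub1 W' e1 h = (h \<in> {})" "in_sub1 W' e2 h = (h \<in> {})"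
    "in_sub1 W' e3 h = (h \<in> {})"
    "in_sub2 W' e1 h = (h \<in> {})" "in_sub2 W' e2 h = (h \<in> {})" "in_sub2 W' e3 h = (h \<in> {})"
    if "h \<in> ?Sp" for h
    using that ne unfolding in_sub1_def in_sub2_def between_def by (auto simp: pW' in_arc_def)
  have old: "both_ends_in ?Lo h" if "(h, b) \<in> set W" "h \<notin> ?Sp" for h b
    using A.both_ends_in_old that unfolding W_def by blast
  have old': "both_ends_in ?Lo h" if "(h, b) \<in> set W'" "h \<notin> ?Sp" for h b
    using A.both_ends_in_old that unfolding W'_def by blast
  have nsp': "\<not> both_ends_in u h \<and> \<not> both_ends_in v h \<and> \<not> both_ends_in x h \<and>
      \<not> both_ends_out u ?Lo h \<and> \<not> both_ends_out v ?Lo h \<and> \<not> both_ends_out x ?Lo h"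
    if "h \<in> ?Sp" for h
    using A.moved_not_both_ends[OF that, of u] A.moved_not_both_ends[OF that, of v]
      A.moved_not_both_ends[OF that, of x] by auto
  show
    "sub1 W e1 = filter (\<lambda>(h, b). both_ends_in u h \<or> h \<in> {}) W"
    "sub1 W' e1 = filter (\<lambda>(h, b). both_ends_in u h \<or> h \<in> {}) W'"
    "sub1 W e2 = filter (\<lambda>(h, b). both_ends_in v h \<or> h \<in> {}) W"
    "sub1 W' e2 = filter (\<lambda>(h, b). both_ends_in v h \<or> h \<in> {}) W'"
    "sub1 W e3 = filter (\<lambda>(h, b). both_ends_in x h \<or> h \<in> {}) W"
    "sub1 W' e3 = filter (\<lambda>(h, b). both_ends_in x h \<or> h \<in> {}) W'"
    "sub2 W e1 = filter (\<lambda>(h, b). both_ends_out u (u @ v @ x) h \<or> h \<in> {e2, e3}) W"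
    "sub2 W' e1 = filter (\<lambda>(h, b). both_ends_out u (u @ v @ x) h \<or> h \<in> {}) W'"
    "sub2 W e2 = filter (\<lambda>(h, b). both_ends_out v (u @ v @ x) h \<or> h \<in> {e1, e3}) W"
    "sub2 W' e2 = filter (\<lambda>(h, b). both_ends_out v (u @ v @ x) h \<or> h \<in> {}) W'"
    "sub2 W e3 = filter (\<lambda>(h, b). both_ends_out x (u @ v @ x) h \<or> h \<in> {e1, e2}) W"
    "sub2 W' e3 = filter (\<lambda>(h, b). both_ends_out x (u @ v @ x) h \<or> h \<in> {}) W'"
    by ((rule sub1_eq_filter_split[where Sp = ?Sp] sub2_eq_filter_split[where Sp = ?Sp]);
        (use regW regW' old old' spW spW' nsp' in auto))+
qed

lemma nu_term_move_c1_new_arrow: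
  fixes e1 e2 e3 :: nat and u v x :: vword
  defines "W \<equiv> [(e3, False), (e1, True)] @ u @ [(e1, False), (e2, True)] @ v @ [(e2, False), (e3, True)] @ x"
    and "W' \<equiv> [(e1, True), (e3, False)] @ u @ [(e2, True), (e1, False)] @ v @ [(e3, True), (e2, False)] @ x"
  assumes vW: "vstring W" and g: "g = e1 \<or> g = e2 \<or> g = e3"
  shows "nu_term W' g = nu_term W g"
proof -
  have dW: "distinct W" using vW vstring_distinct by blast
  interpret A: move_c "(e3, False)" "(e1, True)" "(e1, False)" "(e2, True)" "(e2, False)"
    "(e3, True)" u v x e1 e2 e3
    using dW vW unfolding W_def by unfold_locales auto
  interpret B: three_pairs "(e1, True)" "(e3, False)" "(e2, True)" "(e1, False)" "(e3, True)"
    "(e2, False)" u v x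
    using A.distinct_W' unfolding W'_def by unfold_locales simp
  note ne = A.ne
  let ?Lo = "u @ v @ x"
  let ?Sp = "{e1, e2, e3}"
  note subs = sub_moved_arrows_c1[OF vW[unfolded W_def], folded W_def W'_def]
  have sLo: "set u \<subseteq> set ?Lo" "set v \<subseteq> set ?Lo" "set x \<subseteq> set ?Lo" by auto
  have spf: "\<not> both_ends_in L e" "\<not> both_ends_out L ?Lo e" if "e \<in> ?Sp"
    "set L \<subseteq> set ?Lo" for e L
    using A.moved_not_both_ends that by blast+
  have segs: "filter (\<lambda>(h, b). R h \<or> h \<in> S) L = filter (\<lambda>(h, b). R h) L"
    if "S \<subseteq> ?Sp" "set L \<subseteq> set ?Lo" for R S L
    using A.filter_disj_moved that by blast
  have e1eq: "sub1 W' e1 = sub1 W e1" "sub1 W' e2 = sub1 W e2" "sub1 W' e3 = sub1 W e3"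
    unfolding subs unfolding W_def W'_def using spf[OF _ sLo(1)] spf[OF _ sLo(2)] spf[OF _ sLo(3)] by auto
  have fE: "e \<notin> fst ` set (filter P u @ filter P' v)" "e \<notin> fst ` set (filter P v @ filter P' x)"
    "e \<notin> fst ` set (filter P u @ filter P' x)" if "e \<in> ?Sp" for e P P'
    using A.fresh_filter[OF that] by auto
  have vfa: "vstring (filter (\<lambda>(h, b). R h) u @ filter (\<lambda>(h, b). R h) v @ filter (\<lambda>(h, b). R h) x)" for R
    by (rule A.vstring_filter_Lo)
  have s2W1: "sub2 W e1 = [(e3, False), (e2, True)] @ filter (\<lambda>(h, b). both_ends_out u ?Lo h) v @ [(e2,
    False), (e3, True)] @ filter (\<lambda>(h, b). both_ends_out u ?Lo h) x"
    unfolding subs unfolding W_def filter_append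
    using segs[of "{e2, e3}" u] segs[of "{e2, e3}" v] segs[of "{e2, e3}" x] sLo spf
      filter_both_ends_out_self[of u ?Lo] ne by simp
  have s2W'1: "sub2 W' e1 = filter (\<lambda>(h, b). both_ends_out u ?Lo h) v @ filter (\<lambda>(h, b). both_ends_out u
    ?Lo h) x"
    unfolding subs unfolding W'_def filter_append
    using segs[of "{}" u] segs[of "{}" v] segs[of "{}" x] sLo spf filter_both_ends_out_self[of u ?Lo] ne by simp
  have s2W2: "sub2 W e2 = [(e3, False), (e1, True)] @ filter (\<lambda>(h, b). both_ends_out v ?Lo h) u @ [(e1,
    False), (e3, True)] @ filter (\<lambda>(h, b). both_ends_out v ?Lo h) x"
    unfolding subs unfolding W_def filter_append
    using segs[of "{e1, e3}" u] segs[of "{e1, e3}" v] segs[of "{e1, e3}" x] sLo spf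
      filter_both_ends_out_self[of v ?Lo] ne by simp
  have s2W'2: "sub2 W' e2 = filter (\<lambda>(h, b). both_ends_out v ?Lo h) u @ filter (\<lambda>(h, b). both_ends_out v
    ?Lo h) x"
    unfolding subs unfolding W'_def filter_append
    using segs[of "{}" u] segs[of "{}" v] segs[of "{}" x] sLo spf filter_both_ends_out_self[of v ?Lo] ne by simp
  have s2W3: "sub2 W e3 = [(e1, True)] @ filter (\<lambda>(h, b). both_ends_out x ?Lo h) u @ [(e1, False), (e2,
    True)] @ filter (\<lambda>(h, b). both_ends_out x ?Lo h) v @ [(e2, False)]"
    unfolding subs unfolding W_def filter_append
    using segs[of "{e1, e2}" u] segs[of "{e1, e2}" v] segs[of "{e1, e2}" x] sLo spf
      filter_both_ends_out_self[of x ?Lo] ne by simp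
  have s2W'3: "sub2 W' e3 = filter (\<lambda>(h, b). both_ends_out x ?Lo h) u @ filter (\<lambda>(h, b). both_ends_out x
    ?Lo h) v"
    unfolding subs unfolding W'_def filter_append
    using segs[of "{}" u] segs[of "{}" v] segs[of "{}" x] sLo spf filter_both_ends_out_self[of x ?Lo] ne by simp
  have vv1: "vstring (filter (\<lambda>(h, b). both_ends_out u ?Lo h) v @ filter (\<lambda>(h, b). both_ends_out u ?Lo h) x)"
    using vfa[of "both_ends_out u ?Lo"] filter_both_ends_out_self[of u ?Lo] by simp
  have vv2: "vstring (filter (\<lambda>(h, b). both_ends_out v ?Lo h) u @ filter (\<lambda>(h, b). both_ends_out v ?Lo h) x)"
    using vfa[of "both_ends_out v ?Lo"] filter_both_ends_out_self[of v ?Lo] by simp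
  have vv3: "vstring (filter (\<lambda>(h, b). both_ends_out x ?Lo h) u @ filter (\<lambda>(h, b). both_ends_out x ?Lo h) v)"
    using vfa[of "both_ends_out x ?Lo"] filter_both_ends_out_self[of x ?Lo] by simp
  have H1: "homotopic (sub2 W e1) (sub2 W' e1)"
    unfolding s2W1 s2W'1 by (rule homotopic_move_b_inv[of _ _ e2 e3, OF vv1]) (use fE ne in auto)
  have H2: "homotopic (sub2 W e2) (sub2 W' e2)"
    unfolding s2W2 s2W'2 by (rule homotopic_move_b_inv[of _ _ e1 e3, OF vv2]) (use fE ne in auto)
  have H3: "homotopic (sub2 W e3) (sub2 W' e3)"
    unfolding s2W3 s2W'3 by (rule homotopic_move_b_inv_rotated[OF vv3]) (use fE ne in auto)
  show ?thesis
    using g e1eq H1 H2 H3 nu_term_homotopic homotopic_refl homotopic_sym by metis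
qed

lemma nu_gen_move_c1:
  fixes e1 e2 e3 :: nat and u v x :: vword
  defines "W \<equiv> [(e3, False), (e1, True)] @ u @ [(e1, False), (e2, True)] @ v @ [(e2, False), (e3, True)] @ x"
    and "W' \<equiv> [(e1, True), (e3, False)] @ u @ [(e2, True), (e1, False)] @ v @ [(e3, True), (e2, False)] @ x"
  assumes vW: "vstring W"
  shows "(nu_gen W' :: ('r::comm_ring_1) tensor) = nu_gen W"
proof -
  have dW: "distinct W" using vW vstring_distinct by blast
  interpret A: three_pairs "(e3, False)" "(e1, True)" "(e1, False)" "(e2, True)" "(e2, False)"
    "(e3, True)" u v x
    by unfold_locales (use dW in \<open>simp add: W_def\<close>)
  let ?Lo = "u @ v @ x"
  have setW: "set W' = set W" unfolding W_def W'_def by auto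
  have arrW: "arr W' = arr W" unfolding arr_def setW ..
  have "nu_term W' g = (nu_term W g :: 'r tensor)" if g: "g \<in> arr W" for g
  proof (cases "g = e1 \<or> g = e2 \<or> g = e3")
    case True
    then show ?thesis using nu_term_move_c1_new_arrow vW unfolding W_def W'_def by blast
  next
    case False
    have "(g, True) \<in> set W" "(g, False) \<in> set W"
      using g vstring_both_ends[OF vW, of g True] unfolding arr_def by auto
    then have gpin: "both_ends_in ?Lo g" using False unfolding both_ends_in_def W_def by auto
    have mv: "homotopic ([(e3, False), (e1, True)] @ u' @ [(e1, False), (e2, True)] @ v' @ [(e2, False),
      (e3, True)] @ x')
        ([(e1, True), (e3, False)] @ u' @ [(e2, True), (e1, False)] @ v' @ [(e3, True), (e2, False)] @ x')"
      if "vstring ([(e3, False), (e1, True)] @ u' @ [(e1, False), (e2, True)] @ v' @ [(e2, False), (e3,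
        True)] @ x')"
      for u' v' x'
      using hstep_homotopic[OF hstep.move_c1[OF that]] by simp
    note r = A.old_arrow_segments[OF gpin]
    note K = A.in_arc_pair_slots[OF r(1) r(2)] A.in_arc_pair_slots[OF r(2) r(1)]
    show ?thesis unfolding W_def W'_def
      by (rule A.nu_term_swapped_old_arrow)
        (use vW gpin mv K in \<open>auto simp: W_def in_sub1_def in_sub2_def between_def\<close>)
  qed
  then show ?thesis unfolding nu_gen_eq_sum_nu_term arrW by simp
qed

lemma sub_moved_arrows_c2:
  fixes e1 e2 e3 :: nat and u v x :: vword
  defines "W \<equiv> [(e3, False), (e1, True)] @ u @ [(e2, False), (e3, True)] @ v @ [(e1, False), (e2, True)] @ x"
    and "W' \<equiv> [(e1, True), (e3, False)] @ u @ [(e3, True), (e2, False)] @ v @ [(e2, True), (e1, False)] @ x"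
  assumes vW: "vstring W"
  shows
    "sub2 W e1 = filter (\<lambda>(h, b). both_ends_in x h \<or> h \<in> {}) W"
    "sub2 W' e1 = filter (\<lambda>(h, b). both_ends_in x h \<or> h \<in> {}) W'"
    "sub2 W e2 = filter (\<lambda>(h, b). both_ends_in v h \<or> h \<in> {}) W"
    "sub2 W' e2 = filter (\<lambda>(h, b). both_ends_in v h \<or> h \<in> {}) W'"
    "sub2 W e3 = filter (\<lambda>(h, b). both_ends_in u h \<or> h \<in> {}) W"
    "sub2 W' e3 = filter (\<lambda>(h, b). both_ends_in u h \<or> h \<in> {}) W'"
    "sub1 W e1 = filter (\<lambda>(h, b). both_ends_out x (u @ v @ x) h \<or> h \<in> {}) W"
    "sub1 W' e1 = filter (\<lambda>(h, b). both_ends_out x (u @ v @ x) h \<or> h \<in> {e2, e3}) W'"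
    "sub1 W e2 = filter (\<lambda>(h, b). both_ends_out v (u @ v @ x) h \<or> h \<in> {}) W"
    "sub1 W' e2 = filter (\<lambda>(h, b). both_ends_out v (u @ v @ x) h \<or> h \<in> {e1, e3}) W'"
    "sub1 W e3 = filter (\<lambda>(h, b). both_ends_out u (u @ v @ x) h \<or> h \<in> {}) W"
    "sub1 W' e3 = filter (\<lambda>(h, b). both_ends_out u (u @ v @ x) h \<or> h \<in> {e1, e2}) W'"
proof -
  have dW: "distinct W" using vW vstring_distinct by blast
  interpret A: move_c "(e3, False)" "(e1, True)" "(e2, False)" "(e3, True)" "(e1, False)"
    "(e2, True)" u v x e1 e2 e3
    using dW vW unfolding W_def by unfold_locales auto
  interpret B: three_pairs "(e1, True)" "(e3, False)" "(e3, True)" "(e2, False)" "(e2, True)"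
    "(e1, False)" u v x
    using A.distinct_W' unfolding W'_def by unfold_locales simp
  note ne = A.ne
  have pW: "pos W (e3, False) = 0" "pos W (e1, True) = 1" "pos W (e2, False) = length u + 2"
    "pos W (e3, True) = length u + 3" "pos W (e1, False) = length u + length v + 4"
    "pos W (e2, True) = length u + length v + 5"
    using A.pos_W unfolding W_def by simp_all
  have pW': "pos W' (e1, True) = 0" "pos W' (e3, False) = 1" "pos W' (e3, True) = length u + 2"
    "pos W' (e2, False) = length u + 3" "pos W' (e2, True) = length u + length v + 4"
    "pos W' (e1, False) = length u + length v + 5"
    using B.pos_W unfolding W'_def by simp_all
  let ?Lo = "u @ v @ x"
  let ?Sp = "{e1, e2, e3}"
  note rW1 = A.in_sub_segments(6)[of _ e1 1 "length u + length v + 4"] and rW3 = A.in_sub_segments(4)[of _ e2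
    "length u + length v + 5"
    "length u + 2"]
    and rW5 = A.in_sub_segments(2)[of _ e3 "length u + 3" 0]
  note rV1 = B.in_sub_segments(6)[of _ e1 0 "length u + length v + 5"] and rV3 = B.in_sub_segments(4)[of _ e2
    "length u + length v + 4"
    "length u + 3"]
    and rV5 = B.in_sub_segments(2)[of _ e3 "length u + 2" 1]
  have regW: "in_sub2 W e1 h = both_ends_in x h" "in_sub1 W e1 h = both_ends_out x ?Lo h"
    "in_sub2 W e2 h = both_ends_in v h" "in_sub1 W e2 h = both_ends_out v ?Lo h"
    "in_sub2 W e3 h = both_ends_in u h" "in_sub1 W e3 h = both_ends_out u ?Lo h" if "both_ends_in ?Lo h" for h
    using rW1[OF that] rW3[OF that] rW5[OF that] pW unfolding W_def by auto
  have regW': "in_sub2 W' e1 h = both_ends_in x h" "in_sub1 W' e1 h = both_ends_out x ?Lo h"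
    "in_sub2 W' e2 h = both_ends_in v h" "in_sub1 W' e2 h = both_ends_out v ?Lo h"
    "in_sub2 W' e3 h = both_ends_in u h"
    "in_sub1 W' e3 h = both_ends_out u ?Lo h" if "both_ends_in ?Lo h" for h
    using rV1[OF that] rV3[OF that] rV5[OF that] pW' unfolding W'_def by auto
  have spW: "in_sub2 W e1 h = (h \<in> {})" "in_sub2 W e2 h = (h \<in> {})" "in_sub2 W e3 h = (h \<in> {})"
    "in_sub1 W e1 h = (h \<in> {})" "in_sub1 W e2 h = (h \<in> {})" "in_sub1 W e3 h = (h \<in> {})"
    if "h \<in> ?Sp" for h
    using that ne unfolding in_sub1_def in_sub2_def between_def by (auto simp: pW in_arc_def)
  have spW': "in_sub2 W' e1 h = (h \<in> {})" "in_sub2 W' e2 h = (h \<in> {})"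
    "in_sub2 W' e3 h = (h \<in> {})"
    "in_sub1 W' e1 h = (h \<in> {e2, e3})" "in_sub1 W' e2 h = (h \<in> {e1, e3})"
    "in_sub1 W' e3 h = (h \<in> {e1, e2})"
    if "h \<in> ?Sp" for h
    using that ne unfolding in_sub1_def in_sub2_def between_def by (auto simp: pW' in_arc_def)
  have old: "both_ends_in ?Lo h" if "(h, b) \<in> set W" "h \<notin> ?Sp" for h b
    using A.both_ends_in_old that unfolding W_def by blast
  have old': "both_ends_in ?Lo h" if "(h, b) \<in> set W'" "h \<notin> ?Sp" for h b
    using A.both_ends_in_old that unfolding W'_def by blast
  have nsp': "\<not> both_ends_in u h \<and> \<not> both_ends_in v h \<and> \<not> both_ends_in x h \<and>
      \<not> both_ends_out u ?Lo h \<and> \<not> both_ends_out v ?Lo h \<and> \<not> both_ends_out x ?Lo h"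
    if "h \<in> ?Sp" for h
    using A.moved_not_both_ends[OF that, of u] A.moved_not_both_ends[OF that, of v]
      A.moved_not_both_ends[OF that, of x] by auto
  show
    "sub2 W e1 = filter (\<lambda>(h, b). both_ends_in x h \<or> h \<in> {}) W"
    "sub2 W' e1 = filter (\<lambda>(h, b). both_ends_in x h \<or> h \<in> {}) W'"
    "sub2 W e2 = filter (\<lambda>(h, b). both_ends_in v h \<or> h \<in> {}) W"
    "sub2 W' e2 = filter (\<lambda>(h, b). both_ends_in v h \<or> h \<in> {}) W'"
    "sub2 W e3 = filter (\<lambda>(h, b). both_ends_in u h \<or> h \<in> {}) W"
    "sub2 W' e3 = filter (\<lambda>(h, b). both_ends_in u h \<or> h \<in> {}) W'"
    "sub1 W e1 = filter (\<lambda>(h, b). both_ends_out x (u @ v @ x) h \<or> h \<in> {}) W"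
    "sub1 W' e1 = filter (\<lambda>(h, b). both_ends_out x (u @ v @ x) h \<or> h \<in> {e2, e3}) W'"
    "sub1 W e2 = filter (\<lambda>(h, b). both_ends_out v (u @ v @ x) h \<or> h \<in> {}) W"
    "sub1 W' e2 = filter (\<lambda>(h, b). both_ends_out v (u @ v @ x) h \<or> h \<in> {e1, e3}) W'"
    "sub1 W e3 = filter (\<lambda>(h, b). both_ends_out u (u @ v @ x) h \<or> h \<in> {}) W"
    "sub1 W' e3 = filter (\<lambda>(h, b). both_ends_out u (u @ v @ x) h \<or> h \<in> {e1, e2}) W'"
    by ((rule sub1_eq_filter_split[where Sp = ?Sp] sub2_eq_filter_split[where Sp = ?Sp]);
        (use regW regW' old old' spW spW' nsp' in auto))+
qed

lemma nu_term_move_c2_new_arrow: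
  fixes e1 e2 e3 :: nat and u v x :: vword
  defines "W \<equiv> [(e3, False), (e1, True)] @ u @ [(e2, False), (e3, True)] @ v @ [(e1, False), (e2, True)] @ x"
    and "W' \<equiv> [(e1, True), (e3, False)] @ u @ [(e3, True), (e2, False)] @ v @ [(e2, True), (e1, False)] @ x"
  assumes vW: "vstring W" and g: "g = e1 \<or> g = e2 \<or> g = e3"
  shows "nu_term W' g = nu_term W g"
proof -
  have dW: "distinct W" using vW vstring_distinct by blast
  interpret A: move_c "(e3, False)" "(e1, True)" "(e2, False)" "(e3, True)" "(e1, False)"
    "(e2, True)" u v x e1 e2 e3
    using dW vW unfolding W_def by unfold_locales auto
  interpret B: three_pairs "(e1, True)" "(e3, False)" "(e3, True)" "(e2, False)" "(e2, True)"
    "(e1, False)" u v x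
    using A.distinct_W' unfolding W'_def by unfold_locales simp
  note ne = A.ne
  let ?Lo = "u @ v @ x"
  let ?Sp = "{e1, e2, e3}"
  note subs = sub_moved_arrows_c2[OF vW[unfolded W_def], folded W_def W'_def]
  have sLo: "set u \<subseteq> set ?Lo" "set v \<subseteq> set ?Lo" "set x \<subseteq> set ?Lo" by auto
  have spf: "\<not> both_ends_in L e" "\<not> both_ends_out L ?Lo e" if "e \<in> ?Sp"
    "set L \<subseteq> set ?Lo" for e L
    using A.moved_not_both_ends that by blast+
  have segs: "filter (\<lambda>(h, b). R h \<or> h \<in> S) L = filter (\<lambda>(h, b). R h) L"
    if "S \<subseteq> ?Sp" "set L \<subseteq> set ?Lo" for R S L
    using A.filter_disj_moved that by blast
  have e1eq: "sub2 W' e1 = sub2 W e1" "sub2 W' e2 = sub2 W e2" "sub2 W' e3 = sub2 W e3"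
    unfolding subs unfolding W_def W'_def using spf[OF _ sLo(1)] spf[OF _ sLo(2)] spf[OF _ sLo(3)] by auto
  have fE: "e \<notin> fst ` set (filter P u @ filter P' v)" "e \<notin> fst ` set (filter P v @ filter P' x)"
    "e \<notin> fst ` set (filter P u @ filter P' x)" if "e \<in> ?Sp" for e P P'
    using A.fresh_filter[OF that] by auto
  have vfa: "vstring (filter (\<lambda>(h, b). R h) u @ filter (\<lambda>(h, b). R h) v @ filter (\<lambda>(h, b). R h) x)" for R
    by (rule A.vstring_filter_Lo)
  have s2W1: "sub1 W' e1 = [(e3, False)] @ filter (\<lambda>(h, b). both_ends_out x ?Lo h) u @ [(e3, True), (e2,
    False)] @ filter (\<lambda>(h, b). both_ends_out x ?Lo h) v @ [(e2, True)]"
    unfolding subs unfolding W'_def filter_append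
    using segs[of "{e2, e3}" u] segs[of "{e2, e3}" v] segs[of "{e2, e3}" x] sLo spf
      filter_both_ends_out_self[of x ?Lo] ne by simp
  have s2W'1: "sub1 W e1 = filter (\<lambda>(h, b). both_ends_out x ?Lo h) u @ filter (\<lambda>(h, b). both_ends_out x ?Lo h) v"
    unfolding subs unfolding W_def filter_append
    using segs[of "{}" u] segs[of "{}" v] segs[of "{}" x] sLo spf filter_both_ends_out_self[of x ?Lo] ne by simp
  have s2W2: "sub1 W' e2 = [(e1, True), (e3, False)] @ filter (\<lambda>(h, b). both_ends_out v ?Lo h) u @ [(e3,
    True), (e1, False)] @ filter (\<lambda>(h, b). both_ends_out v ?Lo h) x"
    unfolding subs unfolding W'_def filter_append
    using segs[of "{e1, e3}" u] segs[of "{e1, e3}" v] segs[of "{e1, e3}" x] sLo spf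
      filter_both_ends_out_self[of v ?Lo] ne by simp
  have s2W'2: "sub1 W e2 = filter (\<lambda>(h, b). both_ends_out v ?Lo h) u @ filter (\<lambda>(h, b). both_ends_out v ?Lo h) x"
    unfolding subs unfolding W_def filter_append
    using segs[of "{}" u] segs[of "{}" v] segs[of "{}" x] sLo spf filter_both_ends_out_self[of v ?Lo] ne by simp
  have s2W3: "sub1 W' e3 = [(e1, True), (e2, False)] @ filter (\<lambda>(h, b). both_ends_out u ?Lo h) v @ [(e2,
    True), (e1, False)] @ filter (\<lambda>(h, b). both_ends_out u ?Lo h) x"
    unfolding subs unfolding W'_def filter_append
    using segs[of "{e1, e2}" u] segs[of "{e1, e2}" v] segs[of "{e1, e2}" x] sLo spf
      filter_both_ends_out_self[of u ?Lo] ne by simp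
  have s2W'3: "sub1 W e3 = filter (\<lambda>(h, b). both_ends_out u ?Lo h) v @ filter (\<lambda>(h, b). both_ends_out u ?Lo h) x"
    unfolding subs unfolding W_def filter_append
    using segs[of "{}" u] segs[of "{}" v] segs[of "{}" x] sLo spf filter_both_ends_out_self[of u ?Lo] ne by simp
  have vv1: "vstring (filter (\<lambda>(h, b). both_ends_out x ?Lo h) u @ filter (\<lambda>(h, b). both_ends_out x ?Lo h) v)"
    using vfa[of "both_ends_out x ?Lo"] filter_both_ends_out_self[of x ?Lo] by simp
  have vv2: "vstring (filter (\<lambda>(h, b). both_ends_out v ?Lo h) u @ filter (\<lambda>(h, b). both_ends_out v ?Lo h) x)"
    using vfa[of "both_ends_out v ?Lo"] filter_both_ends_out_self[of v ?Lo] by simp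
  have vv3: "vstring (filter (\<lambda>(h, b). both_ends_out u ?Lo h) v @ filter (\<lambda>(h, b). both_ends_out u ?Lo h) x)"
    using vfa[of "both_ends_out u ?Lo"] filter_both_ends_out_self[of u ?Lo] by simp
  have H1: "homotopic (sub1 W' e1) (sub1 W e1)"
    unfolding s2W1 s2W'1 by (rule homotopic_move_b_inv_rotated'[OF vv1]) (use fE ne in auto)
  have H2: "homotopic (sub1 W' e2) (sub1 W e2)"
    unfolding s2W2 s2W'2 by (rule homotopic_move_b_inv[of _ _ e1 e3, OF vv2]) (use fE ne in auto)
  have H3: "homotopic (sub1 W' e3) (sub1 W e3)"
    unfolding s2W3 s2W'3 by (rule homotopic_move_b_inv[of _ _ e1 e2, OF vv3]) (use fE ne in auto)
  show ?thesis
    using g e1eq H1 H2 H3 nu_term_homotopic homotopic_refl by metis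
qed

lemma nu_gen_move_c2:
  fixes e1 e2 e3 :: nat and u v x :: vword
  defines "W \<equiv> [(e3, False), (e1, True)] @ u @ [(e2, False), (e3, True)] @ v @ [(e1, False), (e2, True)] @ x"
    and "W' \<equiv> [(e1, True), (e3, False)] @ u @ [(e3, True), (e2, False)] @ v @ [(e2, True), (e1, False)] @ x"
  assumes vW: "vstring W"
  shows "(nu_gen W' :: ('r::comm_ring_1) tensor) = nu_gen W"
proof -
  have dW: "distinct W" using vW vstring_distinct by blast
  interpret A: three_pairs "(e3, False)" "(e1, True)" "(e2, False)" "(e3, True)" "(e1, False)"
    "(e2, True)" u v x
    by unfold_locales (use dW in \<open>simp add: W_def\<close>)
  let ?Lo = "u @ v @ x"
  have setW: "set W' = set W" unfolding W_def W'_def by auto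
  have arrW: "arr W' = arr W" unfolding arr_def setW ..
  have "nu_term W' g = (nu_term W g :: 'r tensor)" if g: "g \<in> arr W" for g
  proof (cases "g = e1 \<or> g = e2 \<or> g = e3")
    case True
    then show ?thesis using nu_term_move_c2_new_arrow vW unfolding W_def W'_def by blast
  next
    case False
    have "(g, True) \<in> set W" "(g, False) \<in> set W"
      using g vstring_both_ends[OF vW, of g True] unfolding arr_def by auto
    then have gpin: "both_ends_in ?Lo g" using False unfolding both_ends_in_def W_def by auto
    have mv: "homotopic ([(e3, False), (e1, True)] @ u' @ [(e2, False), (e3, True)] @ v' @ [(e1, False),
      (e2, True)] @ x')
        ([(e1, True), (e3, False)] @ u' @ [(e3, True), (e2, False)] @ v' @ [(e2, True), (e1, False)] @ x')"
      if "vstring ([(e3, False), (e1, True)] @ u' @ [(e2, False), (e3, True)] @ v' @ [(e1, False), (e2,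
        True)] @ x')"
      for u' v' x'
      using hstep_homotopic[OF hstep.move_c2[OF that]] by simp
    note r = A.old_arrow_segments[OF gpin]
    note K = A.in_arc_pair_slots[OF r(1) r(2)] A.in_arc_pair_slots[OF r(2) r(1)]
    show ?thesis unfolding W_def W'_def
      by (rule A.nu_term_swapped_old_arrow)
        (use vW gpin mv K in \<open>auto simp: W_def in_sub1_def in_sub2_def between_def\<close>)
  qed
  then show ?thesis unfolding nu_gen_eq_sum_nu_term arrW by simp
qed

lemma nu_gen_hstep: "hstep w w' \<Longrightarrow> (nu_gen w :: ('r::comm_ring_1) tensor) = nu_gen w'"
proof (induction rule: hstep.induct)
  case (rot w)
  then show ?case using nu_gen_rotate1 by metis
next
  case (ren w f)
  then show ?case using nu_gen_rename by metis
next
  case (move_a u v e)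
  then show ?case using nu_gen_move_a by metis
next
  case (move_b u v e1 e2 xs ys)
  then show ?case using move_b.nu_gen_move_b[OF move_b.intro] by metis
next
  case (move_c1 e3 e1 u e2 v x)
  then show ?case using nu_gen_move_c1 by metis
next
  case (move_c2 e3 e1 u e2 v x)
  then show ?case using nu_gen_move_c2 by metis
qed

lemma nu_gen_homotopic: "homotopic w w' \<Longrightarrow> (nu_gen w :: ('r::comm_ring_1) tensor) = nu_gen w'"
  unfolding homotopic_def
proof (induction rule: rtranclp_induct)
  case (step y z)
  then show ?case using nu_gen_hstep[of y z] nu_gen_hstep[of z y] by metis
qed simp


section \<open>The linear extension to A_0\<close>

lemma nu_cls_cls: "vstring w \<Longrightarrow> (nu_cls (cls w) :: ('r::comm_ring_1) tensor) = nu_gen w"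
proof -
  assume v: "vstring w"
  have ex: "\<exists>w'. w' \<in> cls w \<and> vstring w'" using v homotopic_refl unfolding cls_def by blast
  define w' where "w' = (SOME w'. w' \<in> cls w \<and> vstring w')"
  have "w' \<in> cls w" using someI_ex[OF ex] unfolding w'_def by blast
  then have "homotopic w w'" unfolding cls_def by simp
  then have "(nu_gen w' :: 'r tensor) = nu_gen w" using nu_gen_homotopic homotopic_sym by metis
  then show ?thesis unfolding nu_cls_def w'_def by simp
qed

definition gen_coeff :: "vword \<Rightarrow> vword set \<Rightarrow> 'r::comm_ring_1" where
  "gen_coeff p a = (if \<not> htrivial p \<and> a = cls p then 1 else 0)"

lemma gen2_gen_coeff: "gen2 p q [a, b] = gen_coeff p a * gen_coeff q b"
  unfolding gen2_def gen_coeff_def by auto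

lemma gen2_length: "length ys \<noteq> 2 \<Longrightarrow> gen2 p q ys = 0"
  unfolding gen2_def by auto

lemma nu_gen_length: "length ys \<noteq> 2 \<Longrightarrow> nu_gen w ys = 0"
  unfolding nu_gen_def by (simp add: gen2_length)

lemma nu_gen_pair: "nu_gen w [a, b] = (\<Sum>e\<in>arr w. gen_coeff (sub1 w e) a * gen_coeff (sub2 w e) b -
  gen_coeff (sub2 w e) a * gen_coeff (sub1 w e) b)"
  unfolding nu_gen_def by (simp add: gen2_gen_coeff)

lemma nu_gen_antisym: "nu_gen w [b, a] = - (nu_gen w [a, b] :: 'r::comm_ring_1)"
proof -
  have "(gen_coeff (sub1 w e) b * gen_coeff (sub2 w e) a - gen_coeff (sub2 w e) b * gen_coeff (sub1 w e)
    a :: 'r) =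
     - (gen_coeff (sub1 w e) a * gen_coeff (sub2 w e) b - gen_coeff (sub2 w e) a * gen_coeff (sub1 w e) b)" for e
    by (simp add: mult.commute)
  then show ?thesis unfolding nu_gen_pair by (simp only: sum_negf)
qed

lemma gen2_supp: "gen2 p q ys \<noteq> 0 \<Longrightarrow> ys = [cls p, cls q] \<and> \<not> htrivial p \<and> \<not> htrivial q"
  unfolding gen2_def by (auto split: if_splits)

lemma cls_NT: "vstring p \<Longrightarrow> \<not> htrivial p \<Longrightarrow> cls p \<in> NT"
  unfolding NT_def by blast

lemma nu_gen_support:
  assumes v: "vstring w" and nz: "nu_gen w ys \<noteq> (0::'r::comm_ring_1)"
  shows "\<exists>e\<in>arr w. (ys = [cls (sub1 w e), cls (sub2 w e)] \<or> ys = [cls (sub2 w e), cls (sub1 w e)])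
     \<and> \<not> htrivial (sub1 w e) \<and> \<not> htrivial (sub2 w e)"
proof -
  have "(\<Sum>e\<in>arr w. gen2 (sub1 w e) (sub2 w e) ys - gen2 (sub2 w e) (sub1 w e) ys) \<noteq> (0::'r)"
    using nz unfolding nu_gen_def by simp
  then obtain e where e: "e \<in> arr w" and
    t: "gen2 (sub1 w e) (sub2 w e) ys - gen2 (sub2 w e) (sub1 w e) ys \<noteq> (0::'r)"
    by (rule sum.not_neutral_contains_not_neutral) blast
  then have "gen2 (sub1 w e) (sub2 w e) ys \<noteq> (0::'r) \<or> gen2 (sub2 w e) (sub1 w e) ys \<noteq> (0::'r)" by auto
  then show ?thesis
  proof
    assume "gen2 (sub1 w e) (sub2 w e) ys \<noteq> (0::'r)"
    from gen2_supp[OF this] show ?thesis using e by blast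
  next
    assume "gen2 (sub2 w e) (sub1 w e) ys \<noteq> (0::'r)"
    from gen2_supp[OF this] show ?thesis using e by blast
  qed
qed

lemma finite_nu_gen_support: "finite {ys. nu_gen w ys \<noteq> (0::'r::comm_ring_1)}" if v: "vstring w"
proof -
  have "{ys. nu_gen w ys \<noteq> (0::'r)} \<subseteq> (\<Union>e\<in>arr w. {[cls (sub1 w e), cls (sub2 w e)], [cls (sub2 w e), cls
    (sub1 w e)]})"
    using nu_gen_support[OF v] by blast
  moreover have "finite (\<Union>e\<in>arr w. {[cls (sub1 w e), cls (sub2 w e)], [cls (sub2 w e), cls (sub1 w e)]})"
    using finite_arr by auto
  ultimately show ?thesis by (rule finite_subset)
qed

lemma nu_gen_support_NT: assumes v: "vstring w" and nz: "nu_gen w ys \<noteq> (0::'r::comm_ring_1)"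
  shows "length ys = 2 \<and> set ys \<subseteq> NT"
proof -
  obtain e where e: "e \<in> arr w" and ys: "ys = [cls (sub1 w e), cls (sub2 w e)] \<or> ys = [cls (sub2 w e),
    cls (sub1 w e)]"
    and nt: "\<not> htrivial (sub1 w e)" "\<not> htrivial (sub2 w e)" using nu_gen_support[OF v nz] by blast
  have "cls (sub1 w e) \<in> NT" "cls (sub2 w e) \<in> NT" using cls_NT vstring_sub[OF v] nt by auto
  then show ?thesis using ys by auto
qed

definition supp1 :: "('r::comm_ring_1) tensor \<Rightarrow> vword set set" where
  "supp1 x = {c. x [c] \<noteq> 0}"

lemma tensor_space_support: "x \<in> tensor_space k \<Longrightarrow> x ys \<noteq> (0::'r::comm_ring_1) \<Longrightarrow> length ys = k \<and> set ys \<subseteq> NT"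
  unfolding tensor_space_def by blast

lemma finite_supp1: "x \<in> A0 \<Longrightarrow> finite (supp1 x)"
proof -
  assume x: "x \<in> A0"
  have e: "supp1 x = (\<lambda>c. [c]) -` {ys. x ys \<noteq> 0}" unfolding supp1_def by auto
  have "finite {ys. x ys \<noteq> 0}" using x unfolding tensor_space_def by blast
  then have "finite ((\<lambda>c. [c]) -` {ys. x ys \<noteq> 0})" by (rule finite_vimageI) (auto simp: inj_def)
  then show ?thesis unfolding e .
qed

lemma supp1_NT: "x \<in> A0 \<Longrightarrow> c \<in> supp1 x \<Longrightarrow> c \<in> NT"
  unfolding supp1_def using tensor_space_support by fastforce

lemma nu_cls_NT_rep: "c \<in> NT \<Longrightarrow> \<exists>w. vstring w \<and> \<not> htrivial w \<and> c = cls w \<and> (nu_cls c :: ('r::comm_ring_1)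
  tensor) = nu_gen w"
proof -
  assume "c \<in> NT"
  then obtain w where "vstring w" "\<not> htrivial w" "c = cls w" unfolding NT_def by blast
  then show ?thesis using nu_cls_cls[of w] by blast
qed

lemma nu_cls_length: "c \<in> NT \<Longrightarrow> length ys \<noteq> 2 \<Longrightarrow> nu_cls c ys = (0::'r::comm_ring_1)"
proof -
  assume "c \<in> NT" "length ys \<noteq> 2"
  then obtain w where "(nu_cls c :: 'r tensor) = nu_gen w" using nu_cls_NT_rep by blast
  then show ?thesis using nu_gen_length \<open>length ys \<noteq> 2\<close> by metis
qed

lemma nu_last_A0_sum:
  assumes x: "x \<in> (A0 :: ('r::comm_ring_1) tensor set)" and C: "finite C" "supp1 x \<subseteq> C"
  shows "nu_last x ys = (\<Sum>c\<in>C. x [c] * nu_cls c ys)"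
proof (cases "length ys = 2")
  case True
  have "nu_last x ys = (\<Sum>c\<in>{c. x [c] \<noteq> 0}. x [c] * nu_cls c ys)"
    unfolding nu_last_def using True by simp
  also have "\<dots> = (\<Sum>c\<in>C. x [c] * nu_cls c ys)"
    by (rule sum.mono_neutral_left) (use C in \<open>auto simp: supp1_def\<close>)
  finally show ?thesis .
next
  case False
  have "x (take (length ys - 2) ys @ [c]) = 0" if "2 < length ys" for c
    using tensor_space_support[OF x, of "take (length ys - 2) ys @ [c]"] that by auto
  then have "nu_last x ys = 0" unfolding nu_last_def using False by auto
  moreover have "x [c] * nu_cls c ys = 0" if "c \<in> C" for c
  proof (cases "x [c] = 0")
    case False
    then have "c \<in> NT" using supp1_NT[OF x] unfolding supp1_def by auto
    then have "nu_cls c ys = (0::'r)" using nu_cls_length \<open>length ys \<noteq> 2\<close> by blast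
    then show ?thesis by simp
  qed simp
  ultimately show ?thesis by simp
qed

lemma nu_cls_antisym: "c \<in> NT \<Longrightarrow> nu_cls c [b, a] = - (nu_cls c [a, b] :: 'r::comm_ring_1)"
proof -
  assume "c \<in> NT"
  then obtain w where "(nu_cls c :: 'r tensor) = nu_gen w" using nu_cls_NT_rep by blast
  then show ?thesis using nu_gen_antisym by metis
qed

lemma gen_A0: assumes v: "vstring a" shows "(gen a :: ('r::comm_ring_1) tensor) \<in> A0"
proof -
  have "{ys. (gen a ys :: 'r) \<noteq> 0} \<subseteq> {[cls a]}" unfolding gen_def by auto
  then have f: "finite {ys. (gen a ys :: 'r) \<noteq> 0}" using finite_subset by blast
  have "length ys = 1 \<and> set ys \<subseteq> NT" if "(gen a ys :: 'r) \<noteq> 0" for ys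
  proof -
    have "ys = [cls a]" "\<not> htrivial a" using that unfolding gen_def by (auto split: if_splits)
    then show ?thesis using cls_NT[OF v] by auto
  qed
  then show ?thesis unfolding tensor_space_def using f by blast
qed

lemma nu_last_gen: "vstring a \<Longrightarrow> \<not> htrivial a \<Longrightarrow> nu_last (gen a :: ('r::comm_ring_1) tensor) = nu_gen a"
proof
  fix ys assume v: "vstring a" and nt: "\<not> htrivial a"
  have "supp1 (gen a :: 'r tensor) \<subseteq> {cls a}" unfolding supp1_def gen_def by auto
  then have "nu_last (gen a :: 'r tensor) ys = (\<Sum>c\<in>{cls a}. gen a [c] * nu_cls c ys)"
    using nu_last_A0_sum[OF gen_A0[OF v], of "{cls a}"] by simp
  also have "\<dots> = nu_gen a ys" using nt nu_cls_cls[OF v, where 'r='r] unfolding gen_def by simp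
  finally show "nu_last (gen a :: 'r tensor) ys = nu_gen a ys" .
qed

lemma nu_last_tensor_space: "x \<in> (A0 :: ('r::comm_ring_1) tensor set) \<Longrightarrow> nu_last x \<in> tensor_space 2"
proof -
  assume x: "x \<in> A0"
  have nl: "nu_last x ys = (\<Sum>c\<in>supp1 x. x [c] * nu_cls c ys)" for ys
    using nu_last_A0_sum[OF x finite_supp1[OF x]] by simp
  have nz: "\<exists>c\<in>supp1 x. nu_cls c ys \<noteq> (0::'r)" if "nu_last x ys \<noteq> 0" for ys
  proof -
    from that obtain c where c: "c \<in> supp1 x" "x [c] * nu_cls c ys \<noteq> (0::'r)"
      unfolding nl by (rule sum.not_neutral_contains_not_neutral) blast
    have "nu_cls c ys \<noteq> (0::'r)"
    proof
      assume "nu_cls c ys = (0::'r)"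
      then show False using c(2) by simp
    qed
    then show ?thesis using c(1) by blast
  qed
  have "{ys. nu_last x ys \<noteq> 0} \<subseteq> (\<Union>c\<in>supp1 x. {ys. nu_cls c ys \<noteq> (0::'r)})" using nz by blast
  moreover have "finite (\<Union>c\<in>supp1 x. {ys. nu_cls c ys \<noteq> (0::'r)})"
  proof (rule finite_UN_I[OF finite_supp1[OF x]])
    fix c assume "c \<in> supp1 x"
    then obtain w where "vstring w"
      "(nu_cls c :: 'r tensor) = nu_gen w" using nu_cls_NT_rep supp1_NT[OF x] by blast
    then show "finite {ys. nu_cls c ys \<noteq> (0::'r)}" using finite_nu_gen_support by metis
  qed
  ultimately have f: "finite {ys. nu_last x ys \<noteq> 0}" by (rule finite_subset)
  have "length ys = 2 \<and> set ys \<subseteq> NT" if nz0: "nu_last x ys \<noteq> 0" for ys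
  proof -
    obtain c where c: "c \<in> supp1 x" "nu_cls c ys \<noteq> (0::'r)" using nz[OF nz0] by blast
    then obtain w where "vstring w"
      "(nu_cls c :: 'r tensor) = nu_gen w" using nu_cls_NT_rep supp1_NT[OF x] by blast
    then show ?thesis using nu_gen_support_NT c(2) by metis
  qed
  then show ?thesis using f unfolding tensor_space_def by blast
qed

lemma A0_add: assumes x: "x \<in> (A0 :: ('r::comm_ring_1) tensor set)" and y: "y \<in> A0" shows
  "(\<lambda>ys. x ys + y ys) \<in> A0"
proof -
  have "{ys. x ys + y ys \<noteq> 0} \<subseteq> {ys. x ys \<noteq> 0} \<union> {ys. y ys \<noteq> 0}" by auto
  moreover have "finite ({ys. x ys \<noteq> 0} \<union> {ys. y ys \<noteq> 0})" using x y unfolding tensor_space_def by blast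
  ultimately have f: "finite {ys. x ys + y ys \<noteq> 0}" by (rule finite_subset)
  have "length ys = 1 \<and> set ys \<subseteq> NT" if "x ys + y ys \<noteq> 0" for ys
  proof -
    have "x ys \<noteq> 0 \<or> y ys \<noteq> 0" using that by auto
    then show ?thesis using tensor_space_support[OF x, of ys] tensor_space_support[OF y, of ys] by blast
  qed
  then show ?thesis unfolding tensor_space_def using f by blast
qed

lemma A0_smult: assumes x: "x \<in> (A0 :: ('r::comm_ring_1) tensor set)" shows "(\<lambda>ys. a * x ys) \<in> A0"
proof -
  have "{ys. a * x ys \<noteq> 0} \<subseteq> {ys. x ys \<noteq> 0}" by auto
  moreover have "finite {ys. x ys \<noteq> 0}" using x unfolding tensor_space_def by blast
  ultimately have f: "finite {ys. a * x ys \<noteq> 0}" by (rule finite_subset)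
  have "length ys = 1 \<and> set ys \<subseteq> NT" if "a * x ys \<noteq> 0" for ys
  proof -
    have "x ys \<noteq> 0" using that by auto
    then show ?thesis using tensor_space_support[OF x, of ys] by blast
  qed
  then show ?thesis unfolding tensor_space_def using f by blast
qed

lemma nu_last_add: "x \<in> (A0 :: ('r::comm_ring_1) tensor set) \<Longrightarrow> y \<in> A0 \<Longrightarrow>
   nu_last (\<lambda>ys. x ys + y ys) = (\<lambda>ys. nu_last x ys + nu_last y ys)"
proof
  fix ys assume x: "x \<in> A0" and y: "y \<in> A0"
  let ?C = "supp1 x \<union> supp1 y"
  have fC: "finite ?C" using finite_supp1[OF x] finite_supp1[OF y] by simp
  have sub: "supp1 (\<lambda>ys. x ys + y ys) \<subseteq> ?C" unfolding supp1_def by auto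
  have "nu_last (\<lambda>ys. x ys + y ys) ys = (\<Sum>c\<in>?C. (x [c] + y [c]) * nu_cls c ys)"
    using nu_last_A0_sum[OF A0_add[OF x y] fC sub] by simp
  also have "\<dots> = (\<Sum>c\<in>?C. x [c] * nu_cls c ys) + (\<Sum>c\<in>?C. y [c] * nu_cls c ys)"
    by (simp add: distrib_right sum.distrib)
  also have "\<dots> = nu_last x ys + nu_last y ys"
    using nu_last_A0_sum[OF x fC] nu_last_A0_sum[OF y fC] by simp
  finally show "nu_last (\<lambda>ys. x ys + y ys) ys = nu_last x ys + nu_last y ys" .
qed

lemma nu_last_smult: "x \<in> (A0 :: ('r::comm_ring_1) tensor set) \<Longrightarrow>
   nu_last (\<lambda>ys. a * x ys) = (\<lambda>ys. a * nu_last x ys)"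
proof
  fix ys assume x: "x \<in> A0"
  have fC: "finite (supp1 x)" using finite_supp1[OF x] .
  have sub: "supp1 (\<lambda>ys. a * x ys) \<subseteq> supp1 x" unfolding supp1_def by auto
  have "nu_last (\<lambda>ys. a * x ys) ys = (\<Sum>c\<in>supp1 x. (a * x [c]) * nu_cls c ys)"
    using nu_last_A0_sum[OF A0_smult[OF x] fC sub] by simp
  also have "\<dots> = a * (\<Sum>c\<in>supp1 x. x [c] * nu_cls c ys)"
    by (simp add: sum_distrib_left mult.assoc)
  also have "\<dots> = a * nu_last x ys"
    using nu_last_A0_sum[OF x fC] by simp
  finally show "nu_last (\<lambda>ys. a * x ys) ys = a * nu_last x ys" .
qed

lemma nu_last_antisym: "x \<in> (A0 :: ('r::comm_ring_1) tensor set) \<Longrightarrow> nu_last x [b, a] = - nu_last x [a, b]"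
proof -
  assume x: "x \<in> A0"
  have fC: "finite (supp1 x)" using finite_supp1[OF x] .
  have "nu_last x [b, a] = (\<Sum>c\<in>supp1 x. x [c] * nu_cls c [b, a])" using nu_last_A0_sum[OF x fC] by simp
  also have "\<dots> = (\<Sum>c\<in>supp1 x. - (x [c] * nu_cls c [a, b]))"
  proof (rule sum.cong)
    fix c assume "c \<in> supp1 x"
    then have "nu_cls c [b, a] = - (nu_cls c [a, b] :: 'r)" using nu_cls_antisym supp1_NT[OF x] by blast
    then show "x [c] * nu_cls c [b, a] = - (x [c] * nu_cls c [a, b])" by simp
  qed simp
  also have "\<dots> = - nu_last x [a, b]" using nu_last_A0_sum[OF x fC] by (simp add: sum_negf)
  finally show ?thesis .
qed

section \<open>Spirality\<close>

definition min_length :: "vword set \<Rightarrow> nat" where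
  "min_length c = (LEAST k. \<exists>w. w \<in> c \<and> vstring w \<and> length w = k)"

lemma cls_mem: "w \<in> cls w" unfolding cls_def by (simp add: homotopic_refl)

lemma min_length_attained: assumes "c \<in> NT" shows "\<exists>w. w \<in> c \<and> vstring w \<and> length w = min_length c"
proof -
  obtain a where "vstring a" "c = cls a" using assms unfolding NT_def by blast
  then have "\<exists>k w. w \<in> c \<and> vstring w \<and> length w = k" using cls_mem by blast
  then show ?thesis unfolding min_length_def by (rule LeastI_ex)
qed

lemma min_length_le: "w \<in> c \<Longrightarrow> vstring w \<Longrightarrow> min_length c \<le> length w"
  unfolding min_length_def by (rule Least_le) blast

lemma length_sub_less: assumes e: "e \<in> arr w" shows "length (sub1 w e) < length w"
  "length (sub2 w e) < length w"
proof -
  have m: "(e, True) \<in> set w" using e unfolding arr_def by simp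
  show "length (sub1 w e) < length w" unfolding sub1_eq_filter
    by (rule length_filter_less[OF m]) (simp add: not_in_sub1_self)
  show "length (sub2 w e) < length w" unfolding sub2_eq_filter
    by (rule length_filter_less[OF m]) (simp add: not_in_sub2_self)
qed

lemma nu_cls_min_length_less:
  assumes c: "c \<in> NT" and nz: "nu_cls c [a, b] \<noteq> (0::'r::comm_ring_1)"
  shows "b \<in> NT \<and> min_length b < min_length c"
proof -
  obtain w0 where w0: "w0 \<in> c" "vstring w0"
    "length w0 = min_length c" using min_length_attained[OF c] by blast
  obtain al where al: "vstring al" "c = cls al" using c unfolding NT_def by blast
  have "homotopic al w0" using w0(1) al(2) unfolding cls_def by simp
  then have "(nu_cls c :: 'r tensor) = nu_gen w0" using nu_cls_cls[OF al(1), where 'r='r]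
    nu_gen_homotopic al(2) by metis
  then have "nu_gen w0 [a, b] \<noteq> (0::'r)" using nz by simp
  from nu_gen_support[OF w0(2) this] obtain e where e: "e \<in> arr w0"
    and ab: "[a, b] = [cls (sub1 w0 e), cls (sub2 w0 e)] \<or> [a, b] = [cls (sub2 w0 e), cls (sub1 w0 e)]"
    and nt: "\<not> htrivial (sub1 w0 e)" "\<not> htrivial (sub2 w0 e)" by blast
  obtain s where s: "b = cls s" "s = sub1 w0 e \<or> s = sub2 w0 e" using ab by auto
  have vs: "vstring s" "\<not> htrivial s" using s(2) vstring_sub[OF w0(2)] nt by auto
  have "min_length b \<le> length s" using min_length_le[OF cls_mem vs(1)] s(1) by simp
  also have "\<dots> < length w0" using s(2) length_sub_less[OF e] by auto
  finally show ?thesis using w0(3) cls_NT[OF vs] s(1) by simp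
qed

definition last_factor_below :: "nat \<Rightarrow> ('r::comm_ring_1) tensor \<Rightarrow> bool" where
  "last_factor_below N f \<longleftrightarrow> (\<forall>ys. f ys \<noteq> 0 \<longrightarrow> ys \<noteq> [] \<and> last ys \<in> NT \<and> min_length (last ys) < N)"

lemma last_factor_below_nu_last: assumes P: "last_factor_below (Suc N) (f :: ('r::comm_ring_1) tensor)"
  shows "last_factor_below N (nu_last f)"
  unfolding last_factor_below_def
proof (intro allI impI)
  fix ys assume nz: "nu_last f ys \<noteq> 0"
  have len: "2 \<le> length ys" using nz unfolding nu_last_def by (auto split: if_splits)
  let ?p = "take (length ys - 2) ys" and ?d = "drop (length ys - 2) ys"
  have "(\<Sum>c\<in>{c. f (?p @ [c]) \<noteq> 0}. f (?p @ [c]) * nu_cls c ?d) \<noteq> 0" using nz len unfolding nu_last_def by simp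
  then obtain c where c: "c \<in> {c. f (?p @ [c]) \<noteq> 0}" "f (?p @ [c]) * nu_cls c ?d \<noteq> (0::'r)"
    by (rule sum.not_neutral_contains_not_neutral) blast
  have fc: "f (?p @ [c]) \<noteq> 0" using c(1) by simp
  have nc: "nu_cls c ?d \<noteq> (0::'r)"
  proof
    assume "nu_cls c ?d = (0::'r)" then show False using c(2) by simp
  qed
  have cNT: "c \<in> NT" "min_length c < Suc N" using P fc unfolding last_factor_below_def by auto
  have dl: "length ?d = 2" using len by simp
  then obtain a b where ab: "?d = [a, b]"
    by (metis (no_types, lifting) One_nat_def Suc_1 length_0_conv length_Suc_conv)
  have lst: "last ys = b"
  proof -
    have "ys = ?p @ ?d" by simp
    then show ?thesis using ab by (metis last.simps last_appendR list.distinct(1))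
  qed
  have "b \<in> NT \<and> min_length b < min_length c" using nu_cls_min_length_less[OF cNT(1)] nc ab by metis
  then show "ys \<noteq> [] \<and> last ys \<in> NT \<and> min_length (last ys) < N" using lst cNT(2) len by auto
qed

lemma nu_last_funpow_vanishes: "last_factor_below N (f :: ('r::comm_ring_1) tensor) \<Longrightarrow> (nu_last ^^ N) f = (\<lambda>_. 0)"
proof (induction N arbitrary: f)
  case 0
  then show ?case unfolding last_factor_below_def by auto
next
  case (Suc N)
  have "(nu_last ^^ Suc N) f = (nu_last ^^ N) (nu_last f)" by (simp only: funpow_Suc_right comp_apply)
  then show ?case using Suc.IH[OF last_factor_below_nu_last[OF Suc.prems]] by simp
qed

lemma nu_pow_vanishes: "x \<in> (A0 :: ('r::comm_ring_1) tensor set) \<Longrightarrow> \<exists>n\<ge>1. nu_pow n x = (\<lambda>_. 0)"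
proof -
  assume x: "x \<in> A0"
  define N where "N = Suc (Max (min_length ` supp1 x))"
  have "last_factor_below N x" unfolding last_factor_below_def
  proof (intro allI impI)
    fix ys assume nz: "x ys \<noteq> 0"
    then have l: "length ys = 1" "set ys \<subseteq> NT" using tensor_space_support[OF x] by blast+
    then obtain c where ys: "ys = [c]" by (metis One_nat_def length_0_conv length_Suc_conv)
    have cS: "c \<in> supp1 x" using nz ys unfolding supp1_def by simp
    have "min_length c \<le> Max (min_length ` supp1 x)" using cS finite_supp1[OF x] by simp
    then show "ys \<noteq> [] \<and> last ys \<in> NT \<and> min_length (last ys) < N" using ys l unfolding N_def by auto
  qed
  then have "nu_pow N x = (\<lambda>_. 0)" unfolding nu_pow_def by (rule nu_last_funpow_vanishes)
  moreover have "N \<ge> 1" unfolding N_def by simp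
  ultimately show ?thesis by blast
qed


section \<open>The co-Jacobi identity\<close>

lemma in_arc_chord_sides: "p \<noteq> q \<Longrightarrow> r \<noteq> s \<Longrightarrow> in_arc p q r \<Longrightarrow> in_arc p q s \<Longrightarrow>
  (in_arc r s p \<and> in_arc r s q) \<or> (in_arc s r p \<and> in_arc s r q)"
  unfolding in_arc_def by (auto split: if_splits)

lemma in_arc_nested: "p \<noteq> q \<Longrightarrow> r \<noteq> s \<Longrightarrow> in_arc p q r \<Longrightarrow> in_arc p q s \<Longrightarrow> in_arc r s p \<Longrightarrow> in_arc r s q \<Longrightarrow>
  in_arc s r k \<Longrightarrow> in_arc p q k"
  unfolding in_arc_def by (auto split: if_splits)

definition in_side :: "vword \<Rightarrow> bool \<Rightarrow> nat \<Rightarrow> nat \<Rightarrow> bool" where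
  "in_side w j e h = (if j then in_sub1 w e h else in_sub2 w e h)"

definition sub_side :: "vword \<Rightarrow> bool \<Rightarrow> nat \<Rightarrow> vword" where
  "sub_side w j e = (if j then sub1 w e else sub2 w e)"

lemma sub_side_eq_filter: "sub_side w j e = filter (\<lambda>(h, b). in_side w j e h) w"
  unfolding sub_side_def in_side_def sub1_eq_filter sub2_eq_filter by simp

definition side_arc :: "vword \<Rightarrow> bool \<Rightarrow> nat \<Rightarrow> nat \<times> nat" where
  "side_arc w j e = (if j then (pos w (e, True), pos w (e, False)) else (pos w (e, False), pos w (e, True)))"

lemma in_side_arc: "in_side w j e h = (in_arc (fst (side_arc w j e)) (snd (side_arc w j e)) (pos w (h, True)) \<and>
    in_arc (fst (side_arc w j e)) (snd (side_arc w j e)) (pos w (h, False)))"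
  unfolding in_side_def side_arc_def in_sub1_def in_sub2_def between_def by simp

lemma arr_both_ends: "vstring w \<Longrightarrow> e \<in> arr w \<Longrightarrow> (e, True) \<in> set w \<and> (e, False) \<in> set w"
  unfolding arr_def using vstring_both_ends by blast

lemma side_arc_distinct: assumes v: "vstring w" and e: "e \<in> arr w" shows
  "fst (side_arc w j e) \<noteq> snd (side_arc w j e)"
proof -
  have d: "distinct w" using v vstring_distinct by blast
  have "pos w (e, True) \<noteq> pos w (e, False)" using pos_inj[OF d] arr_both_ends[OF v e] by blast
  then show ?thesis unfolding side_arc_def by auto
qed

lemma side_arc_swap: "side_arc w (\<not> j) e = (snd (side_arc w j e), fst (side_arc w j e))"
  unfolding side_arc_def by auto

lemma side_arc_set: "{fst (side_arc w j e), snd (side_arc w j e)} = {pos w (e, True), pos w (e, False)}"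
  unfolding side_arc_def by auto

lemma in_side_sym:
  assumes v: "vstring w" and e: "e \<in> arr w" and f: "f \<in> arr w" and j: "in_side w j e f"
  shows "in_side w True f e \<or> in_side w False f e"
proof -
  obtain p q where pq: "side_arc w j e = (p, q)" by (cases "side_arc w j e")
  have pqn: "p \<noteq> q" using side_arc_distinct[OF v e, of j] pq by simp
  have rs: "pos w (f, True) \<noteq> pos w (f, False)" using side_arc_distinct[OF v f, of True]
    unfolding side_arc_def by simp
  have "in_arc p q (pos w (f, True))" "in_arc p q (pos w (f, False))" using j pq unfolding in_side_arc by auto
  from in_arc_chord_sides[OF pqn rs this]
  have "(in_arc (pos w (f, True)) (pos w (f, False)) p \<and> in_arc (pos w (f, True)) (pos w (f, False)) q) \<or>
        (in_arc (pos w (f, False)) (pos w (f, True)) p \<and> in_arc (pos w (f, False)) (pos w (f, True)) q)" .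
  moreover have "{p, q} = {pos w (e, True), pos w (e, False)}" using side_arc_set[of w j e] pq by simp
  ultimately show ?thesis unfolding in_side_arc side_arc_def by (auto simp: doubleton_eq_iff)
qed

lemma not_in_both_sides: assumes v: "vstring w" and e: "e \<in> arr w" shows
  "\<not> (in_side w j e h \<and> in_side w (\<not> j) e h)"
proof -
  obtain p q where pq: "side_arc w j e = (p, q)" by (cases "side_arc w j e")
  have pqn: "p \<noteq> q" using side_arc_distinct[OF v e, of j] pq by simp
  have "\<not> (in_arc p q k \<and> in_arc q p k)" for k using pqn unfolding in_arc_def by auto
  then show ?thesis unfolding in_side_arc side_arc_swap pq by auto
qed

lemma in_side_nested:
  assumes v: "vstring w" and e: "e \<in> arr w" and f: "f \<in> arr w"
    and j: "in_side w j e f" and k: "in_side w k f e" and h: "in_side w (\<not> k) f h"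
  shows "in_side w j e h"
proof -
  obtain p q where pq: "side_arc w j e = (p, q)" by (cases "side_arc w j e")
  obtain r s where rs: "side_arc w k f = (r, s)" by (cases "side_arc w k f")
  have pqn: "p \<noteq> q" using side_arc_distinct[OF v e, of j] pq by simp
  have rsn: "r \<noteq> s" using side_arc_distinct[OF v f, of k] rs by simp
  have a: "in_arc p q r" "in_arc p q s"
  proof -
    have "{r, s} = {pos w (f, True), pos w (f, False)}" using side_arc_set[of w k f] rs by simp
    moreover have "in_arc p q (pos w (f, True))"
      "in_arc p q (pos w (f, False))" using j pq unfolding in_side_arc by auto
    ultimately show "in_arc p q r" "in_arc p q s" by (auto simp: doubleton_eq_iff)
  qed
  have b: "in_arc r s p" "in_arc r s q"
  proof -
    have "{p, q} = {pos w (e, True), pos w (e, False)}" using side_arc_set[of w j e] pq by simp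
    moreover have "in_arc r s (pos w (e, True))"
      "in_arc r s (pos w (e, False))" using k rs unfolding in_side_arc by auto
    ultimately show "in_arc r s p" "in_arc r s q" by (auto simp: doubleton_eq_iff)
  qed
  have "in_arc s r (pos w (h, True))" "in_arc s r (pos w (h, False))"
    using h rs unfolding in_side_arc side_arc_swap by auto
  then show ?thesis using in_arc_nested[OF pqn rsn a b] pq unfolding in_side_arc by auto
qed

lemma in_side_filter:
  assumes v: "vstring w" and fv: "(f, True) \<in> set (filter P w)" "(f, False) \<in> set (filter P w)"
    and hv: "(h, True) \<in> set (filter P w)" "(h, False) \<in> set (filter P w)"
  shows "in_side (filter P w) i f h = in_side w i f h"
proof -
  have d: "distinct w" using v vstring_distinct by blast
  show ?thesis unfolding in_side_def in_sub1_def in_sub2_def using between_filter[OF d] fv hv by simp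
qed

lemma sub_side_sub_side:
  assumes v: "vstring w" and f: "f \<in> arr w" and j: "in_side w j e f"
  shows "sub_side (sub_side w j e) i f = filter (\<lambda>(h, b). in_side w j e h \<and> in_side w i f h) w"
proof -
  let ?P = "\<lambda>(h, b). in_side w j e h"
  have "sub_side (sub_side w j e) i f = filter (\<lambda>(h, b). in_side (filter ?P w) i f h) (filter ?P w)"
    by (simp only: sub_side_eq_filter)
  also have "\<dots> = filter (\<lambda>x. ?P x \<and> (case x of (h, b) \<Rightarrow> in_side (filter ?P w) i f h)) w"
    by (simp add: conj_commute)
  also have "\<dots> = filter (\<lambda>(h, b). in_side w j e h \<and> in_side w i f h) w"
  proof (rule filter_cong)
    fix z assume z: "z \<in> set w"
    obtain h b where zh: "z = (h, b)" by (cases z)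
    have fl: "(f, True) \<in> set (filter ?P w)" "(f, False) \<in> set (filter ?P w)"
      using arr_both_ends[OF v f] j by auto
    have "in_side (filter ?P w) i f h = in_side w i f h" if "in_side w j e h"
    proof -
      have "(h, True) \<in> set w" "(h, False) \<in> set w" using vstring_both_ends[OF v] z zh by blast+
      then have "(h, True) \<in> set (filter ?P w)" "(h, False) \<in> set (filter ?P w)" using that by auto
      then show ?thesis using in_side_filter[OF v fl] by blast
    qed
    then show "(?P z \<and> (case z of (h, b) \<Rightarrow> in_side (filter ?P w) i f h)) = (case z of (h, b) \<Rightarrow> in_side w
      j e h \<and> in_side w i f h)"
      using zh by auto
  qed simp
  finally show ?thesis .
qed

lemma arr_sub_side: "arr (sub_side w j e) = {f \<in> arr w. in_side w j e f}"
  unfolding arr_def sub_side_eq_filter by auto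

definition side_sign :: "bool \<Rightarrow> 'r::comm_ring_1" where "side_sign j = (if j then -1 else 1)"

definition jacobi_side_term :: "vword \<Rightarrow> bool \<Rightarrow> nat \<Rightarrow> nat \<Rightarrow> vword set \<Rightarrow> vword set \<Rightarrow> vword set \<Rightarrow>
  'r::comm_ring_1" where
  "jacobi_side_term w j e f a b c = side_sign j * gen_coeff (sub_side w (\<not> j) e) a *
     (gen_coeff (sub_side (sub_side w j e) True f) b * gen_coeff (sub_side (sub_side w j e) False f) c -
      gen_coeff (sub_side (sub_side w j e) False f) b * gen_coeff (sub_side (sub_side w j e) True f) c)"

definition jacobi_term :: "vword \<Rightarrow> nat \<Rightarrow> nat \<Rightarrow> vword set \<Rightarrow> vword set \<Rightarrow> vword set \<Rightarrow> 'r::comm_ring_1" where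
  "jacobi_term w e f a b c = (if in_side w False e f then jacobi_side_term w False e f a b c else 0) +
    (if in_side w True e f then jacobi_side_term w True e f a b c else 0)"

text \<open>The coefficient of [a, b, c] in (id \<otimes> \<nu>)(\<nu>\<langle>w\<rangle>).\<close>

definition nu_nu_coeff :: "vword \<Rightarrow> vword set \<Rightarrow> vword set \<Rightarrow> vword set \<Rightarrow> 'r::comm_ring_1" where
  "nu_nu_coeff w a b c = (\<Sum>e\<in>arr w. gen_coeff (sub1 w e) a * nu_gen (sub2 w e) [b, c] - gen_coeff (sub2
    w e) a * nu_gen (sub1 w e) [b, c])"

lemma nu_gen_sub_side: "(nu_gen (sub_side w j e) [b, c] :: 'r::comm_ring_1) =
   (\<Sum>f\<in>arr w. if in_side w j e f then gen_coeff (sub_side (sub_side w j e) True f) b * gen_coeff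
     (sub_side (sub_side w j e) False f) c -
      gen_coeff (sub_side (sub_side w j e) False f) b * gen_coeff (sub_side (sub_side w j e) True f) c else 0)"
proof -
  have "(nu_gen (sub_side w j e) [b, c] :: 'r) = (\<Sum>f\<in>arr (sub_side w j e). gen_coeff (sub_side (sub_side
    w j e) True f) b * gen_coeff (sub_side (sub_side w j e) False f) c -
      gen_coeff (sub_side (sub_side w j e) False f) b * gen_coeff (sub_side (sub_side w j e) True f) c)"
    unfolding nu_gen_pair sub_side_def by simp
  also have "\<dots> = (\<Sum>f\<in>arr w. if in_side w j e f then gen_coeff (sub_side (sub_side w j e) True f) b *
    gen_coeff (sub_side (sub_side w j e) False f) c -
      gen_coeff (sub_side (sub_side w j e) False f) b * gen_coeff (sub_side (sub_side w j e) True f) c else 0)"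
    unfolding arr_sub_side by (simp add: sum.inter_filter[OF finite_arr])
  finally show ?thesis .
qed

lemma nu_nu_coeff_jacobi_terms: "(nu_nu_coeff w a b c :: 'r::comm_ring_1) = (\<Sum>e\<in>arr w. \<Sum>f\<in>arr w.
  jacobi_term w e f a b c)"
proof -
  have "(gen_coeff (sub1 w e) a * nu_gen (sub2 w e) [b, c] - gen_coeff (sub2 w e) a * nu_gen (sub1 w e)
    [b, c] :: 'r) =
      (\<Sum>f\<in>arr w. jacobi_term w e f a b c)" for e
  proof -
    have s2: "sub2 w e = sub_side w False e" "sub1 w e = sub_side w True e" unfolding sub_side_def by simp_all
    have pw: "gen_coeff (sub_side w True e) a * (if in_side w False e f then gen_coeff (sub_side
      (sub_side w False e) True f) b * gen_coeff (sub_side (sub_side w False e) False f) c -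
      gen_coeff (sub_side (sub_side w False e) False f) b * gen_coeff (sub_side (sub_side w False e)
        True f) c else 0) -
      gen_coeff (sub_side w False e) a * (if in_side w True e f then gen_coeff (sub_side (sub_side w
        True e) True f) b * gen_coeff (sub_side (sub_side w True e) False f) c -
      gen_coeff (sub_side (sub_side w True e) False f) b * gen_coeff (sub_side (sub_side w True e) True
        f) c else 0) = (jacobi_term w e f a b c :: 'r)" for f
      unfolding jacobi_term_def jacobi_side_term_def side_sign_def by simp
    show ?thesis unfolding s2 nu_gen_sub_side sum_distrib_left sum_subtractf[symmetric] pw ..
  qed
  then show ?thesis unfolding nu_nu_coeff_def by simp
qed

lemma not_in_side_self: "\<not> in_side w j e e"
  unfolding in_side_def using not_in_sub1_self not_in_sub2_self by auto

lemma jacobi_term_self: "jacobi_term w e e a b c = 0"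
  unfolding jacobi_term_def using not_in_side_self by simp

lemma jacobi_term_nested:
  assumes v: "vstring w" and e: "e \<in> arr w" and f: "f \<in> arr w"
    and j: "in_side w j e f" and k: "in_side w k f e"
  shows "(jacobi_term w e f a b c :: 'r::comm_ring_1) = side_sign j * side_sign k * gen_coeff (sub_side
    w (\<not> j) e) a *
     (gen_coeff (sub_side w (\<not> k) f) b * gen_coeff (filter (\<lambda>(h, b). in_side w j e h \<and> in_side w k f h) w) c -
      gen_coeff (filter (\<lambda>(h, b). in_side w j e h \<and> in_side w k f h) w) b * gen_coeff (sub_side w (\<not> k) f) c)"
proof -
  let ?Q = "filter (\<lambda>(h, b). in_side w j e h \<and> in_side w k f h) w"
  have nj: "\<not> in_side w (\<not> j) e f" using not_in_both_sides[OF v e, of j f] j by blast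
  have jacobi_side_term: "(jacobi_term w e f a b c :: 'r) = jacobi_side_term w j e f a b c"
    unfolding jacobi_term_def using j nj by (cases j) auto
  have sS: "sub_side (sub_side w j e) (\<not> k) f = sub_side w (\<not> k) f"
  proof -
    have "sub_side (sub_side w j e) (\<not> k) f = filter (\<lambda>(h, b). in_side w j e h \<and> in_side w (\<not> k) f h) w"
      by (rule sub_side_sub_side[OF v f j])
    also have "\<dots> = filter (\<lambda>(h, b). in_side w (\<not> k) f h) w"
      by (rule filter_cong) (use in_side_nested[OF v e f j k] in auto)
    finally show ?thesis unfolding sub_side_eq_filter .
  qed
  have sQ: "sub_side (sub_side w j e) k f = ?Q" by (rule sub_side_sub_side[OF v f j])
  show ?thesis
  proof (cases k)
    case True
    then have "sub_side (sub_side w j e) True f = ?Q"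
      "sub_side (sub_side w j e) False f = sub_side w (\<not> k) f" using sQ sS by simp_all
    then show ?thesis unfolding jacobi_side_term jacobi_side_term_def using True
      by (simp add: side_sign_def algebra_simps)
  next
    case False
    then have "sub_side (sub_side w j e) False f = ?Q"
      "sub_side (sub_side w j e) True f = sub_side w (\<not> k) f" using sQ sS by simp_all
    then show ?thesis unfolding jacobi_side_term jacobi_side_term_def using False
      by (simp add: side_sign_def algebra_simps)
  qed
qed

definition jacobi_cyclic_term :: "vword \<Rightarrow> nat \<Rightarrow> nat \<Rightarrow> vword set \<Rightarrow> vword set \<Rightarrow> vword set \<Rightarrow> 'r::comm_ring_1" where
  "jacobi_cyclic_term w e f a b c = jacobi_term w e f a b c + jacobi_term w e f b c a + jacobi_term w e f c a b"

lemma jacobi_term_unrelated: "\<not> in_side w True e f \<Longrightarrow> \<not> in_side w False e f \<Longrightarrow> jacobi_term w e f a b c = 0"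
  unfolding jacobi_term_def by simp

lemma cyclic_sum_swap: "(t::'r::comm_ring_1) * Sa * (Pb * Qc - Qb * Pc) + t * Sb * (Pc * Qa - Qc * Pa) +
  t * Sc * (Pa * Qb - Qa * Pb) =
  - (t * Pa * (Sb * Qc - Qb * Sc) + t * Pb * (Sc * Qa - Qc * Sa) + t * Pc * (Sa * Qb - Qa * Sb))"
  by (simp add: algebra_simps)

lemma jacobi_cyclic_term_antisym:
  assumes v: "vstring w" and e: "e \<in> arr w" and f: "f \<in> arr w"
  shows "(jacobi_cyclic_term w f e a b c :: 'r::comm_ring_1) = - jacobi_cyclic_term w e f a b c"
proof (cases "\<exists>j. in_side w j e f")
  case True
  then obtain j where j: "in_side w j e f" by blast
  obtain k where k: "in_side w k f e" using in_side_sym[OF v e f j] by blast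
  let ?Q = "filter (\<lambda>(h, b). in_side w j e h \<and> in_side w k f h) w"
  have Q': "filter (\<lambda>(h, b). in_side w k f h \<and> in_side w j e h) w = ?Q"
    by (rule filter_cong) auto
  let ?P = "sub_side w (\<not> j) e" and ?S = "sub_side w (\<not> k) f"
  have t1: "(jacobi_term w e f x y z :: 'r) = side_sign j * side_sign k * gen_coeff ?P x * (gen_coeff ?S
    y * gen_coeff ?Q z - gen_coeff ?Q y * gen_coeff ?S z)" for x y z
    by (rule jacobi_term_nested[OF v e f j k])
  have t2: "(jacobi_term w f e x y z :: 'r) = side_sign k * side_sign j * gen_coeff ?S x * (gen_coeff ?P
    y * gen_coeff ?Q z - gen_coeff ?Q y * gen_coeff ?P z)" for x y z
    using jacobi_term_nested[OF v f e k j, of x y z] unfolding Q' .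
  have c: "side_sign k * side_sign j = (side_sign j * side_sign k :: 'r)" by (simp add: mult.commute)
  show ?thesis unfolding jacobi_cyclic_term_def t1 t2 c by (rule cyclic_sum_swap)
next
  case False
  then have n1: "\<not> in_side w True e f" "\<not> in_side w False e f" by auto
  have n2: "\<not> in_side w True f e" "\<not> in_side w False f e"
    using in_side_sym[OF v f e, of True] in_side_sym[OF v f e, of False] False by auto
  show ?thesis unfolding jacobi_cyclic_term_def using jacobi_term_unrelated[OF n1, where 'a='r]
    jacobi_term_unrelated[OF n2, where 'a='r] by simp
qed

lemma sum_sum_antisym:
  assumes "finite A" and diag: "\<And>x. x \<in> A \<Longrightarrow> K x x = (0::'r::comm_ring_1)"
    and anti: "\<And>x y. x \<in> A \<Longrightarrow> y \<in> A \<Longrightarrow> K y x = - K x y"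
  shows "(\<Sum>x\<in>A. \<Sum>y\<in>A. K x y) = 0"
  using assms
proof (induction A rule: finite_induct)
  case empty show ?case by simp
next
  case (insert a A)
  have IH: "(\<Sum>x\<in>A. \<Sum>y\<in>A. K x y) = 0"
  proof (rule insert.IH)
    show "\<And>x. x \<in> A \<Longrightarrow> K x x = 0" using insert(4) by blast
    show "\<And>x y. x \<in> A \<Longrightarrow> y \<in> A \<Longrightarrow> K y x = - K x y" using insert(5) by blast
  qed
  have e1: "(\<Sum>x\<in>insert a A. \<Sum>y\<in>insert a A. K x y) =
     (K a a + (\<Sum>y\<in>A. K a y)) + (\<Sum>x\<in>A. K x a + (\<Sum>y\<in>A. K x y))"
    using insert(1,2) by (simp add: add.assoc)
  have e2: "(\<Sum>x\<in>A. K x a + (\<Sum>y\<in>A. K x y)) = (\<Sum>x\<in>A. K x a) + (\<Sum>x\<in>A. \<Sum>y\<in>A. K x y)"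
    by (rule sum.distrib)
  have e3: "(\<Sum>x\<in>A. K x a) = (\<Sum>y\<in>A. - K a y)"
  proof (rule sum.cong)
    fix x assume "x \<in> A"
    then show "K x a = - K a x" using insert(5)[of a x] by blast
  qed simp
  have e4: "(\<Sum>y\<in>A. - K a y) = - (\<Sum>y\<in>A. K a y)" by (rule sum_negf)
  have e5: "K a a = 0" using insert(4)[of a] by blast
  show ?case unfolding e1 e2 e3 e4 e5 IH by simp
qed

lemma nu_nu_coeff_cyclic_sum:
  assumes v: "vstring w"
  shows "(nu_nu_coeff w a b c + nu_nu_coeff w b c a + nu_nu_coeff w c a b :: 'r::comm_ring_1) = 0"
proof -
  have "(nu_nu_coeff w a b c + nu_nu_coeff w b c a + nu_nu_coeff w c a b :: 'r) = (\<Sum>e\<in>arr w. \<Sum>f\<in>arr w.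
    jacobi_cyclic_term w e f a b c)"
    unfolding nu_nu_coeff_jacobi_terms jacobi_cyclic_term_def by (simp add: sum.distrib)
  also have "\<dots> = 0"
  proof (rule sum_sum_antisym[OF finite_arr])
    show "\<And>x. x \<in> arr w \<Longrightarrow> (jacobi_cyclic_term w x x a b c :: 'r) = 0" unfolding jacobi_cyclic_term_def
      by (simp add: jacobi_term_self)
    show "\<And>x y. x \<in> arr w \<Longrightarrow> y \<in> arr w \<Longrightarrow> (jacobi_cyclic_term w y x a b c :: 'r) = - jacobi_cyclic_term w
      x y a b c"
      using jacobi_cyclic_term_antisym[OF v] by blast
  qed
  finally show ?thesis .
qed

lemma nu_gen_htrivial: "htrivial s \<Longrightarrow> (nu_gen s :: ('r::comm_ring_1) tensor) = (\<lambda>_. 0)"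
proof -
  assume "htrivial s"
  then have "(nu_gen s :: 'r tensor) = nu_gen []" unfolding htrivial_def by (rule nu_gen_homotopic)
  also have "\<dots> = (\<lambda>_. 0)" unfolding nu_gen_def arr_def by simp
  finally show ?thesis .
qed

lemma sum_gen_coeff_nu_cls:
  assumes D: "finite D" "cls s \<in> D" and v: "vstring s"
  shows "(\<Sum>d\<in>D. gen_coeff s d * nu_cls d [b, c]) = (nu_gen s [b, c] :: 'r::comm_ring_1)"
proof -
  have "(\<Sum>d\<in>D. gen_coeff s d * nu_cls d [b, c]) = (\<Sum>d\<in>D. if d = cls s then (if htrivial s then 0 else
    nu_cls d [b, c]) else (0::'r))"
    by (rule sum.cong) (auto simp: gen_coeff_def)
  also have "\<dots> = (if htrivial s then 0 else nu_cls (cls s) [b, c])"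
    using D by simp
  also have "\<dots> = nu_gen s [b, c]"
    using nu_gen_htrivial[of s, where 'r='r] nu_cls_cls[OF v, where 'r='r] by auto
  finally show ?thesis .
qed

lemma sum_nu_gen_nu_cls:
  assumes v: "vstring w" and D: "finite D" and DD: "\<And>e. e \<in> arr w \<Longrightarrow> cls (sub1 w e) \<in> D \<and> cls (sub2 w e) \<in> D"
  shows "(\<Sum>d\<in>D. nu_gen w [a, d] * nu_cls d [b, c]) = (nu_nu_coeff w a b c :: 'r::comm_ring_1)"
proof -
  have "(\<Sum>d\<in>D. nu_gen w [a, d] * nu_cls d [b, c]) =
     (\<Sum>d\<in>D. \<Sum>e\<in>arr w. (gen_coeff (sub1 w e) a * gen_coeff (sub2 w e) d - gen_coeff (sub2 w e) a *
       gen_coeff (sub1 w e) d) * (nu_cls d [b, c] :: 'r))"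
    unfolding nu_gen_pair by (simp add: sum_distrib_right)
  also have "\<dots> = (\<Sum>e\<in>arr w. \<Sum>d\<in>D. (gen_coeff (sub1 w e) a * gen_coeff (sub2 w e) d - gen_coeff (sub2 w
    e) a * gen_coeff (sub1 w e) d) * (nu_cls d [b, c] :: 'r))"
    by (rule sum.swap)
  also have "\<dots> = (\<Sum>e\<in>arr w. gen_coeff (sub1 w e) a * (\<Sum>d\<in>D. gen_coeff (sub2 w e) d * nu_cls d [b, c]) -
      gen_coeff (sub2 w e) a * (\<Sum>d\<in>D. gen_coeff (sub1 w e) d * (nu_cls d [b, c] :: 'r)))"
    by (simp add: sum_distrib_left sum_subtractf[symmetric] algebra_simps)
  also have "\<dots> = nu_nu_coeff w a b c"
    unfolding nu_nu_coeff_def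
  proof (rule sum.cong)
    fix e assume e: "e \<in> arr w"
    have "(\<Sum>d\<in>D. gen_coeff (sub2 w e) d * nu_cls d [b, c]) = (nu_gen (sub2 w e) [b, c] :: 'r)"
      using sum_gen_coeff_nu_cls[OF D(1)] DD[OF e] vstring_sub[OF v] by blast
    moreover have "(\<Sum>d\<in>D. gen_coeff (sub1 w e) d * nu_cls d [b, c]) = (nu_gen (sub1 w e) [b, c] :: 'r)"
      using sum_gen_coeff_nu_cls[OF D(1)] DD[OF e] vstring_sub[OF v] by blast
    ultimately show "gen_coeff (sub1 w e) a * (\<Sum>d\<in>D. gen_coeff (sub2 w e) d * nu_cls d [b, c]) -
      gen_coeff (sub2 w e) a * (\<Sum>d\<in>D. gen_coeff (sub1 w e) d * (nu_cls d [b, c] :: 'r)) =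
      gen_coeff (sub1 w e) a * nu_gen (sub2 w e) [b, c] - gen_coeff (sub2 w e) a * nu_gen (sub1 w e) [b,
        c]" by simp
  qed simp
  finally show ?thesis .
qed

definition repr :: "vword set \<Rightarrow> vword" where "repr c = (SOME w. w \<in> c \<and> vstring w)"

lemma nu_cls_repr: "nu_cls c = nu_gen (repr c)" unfolding nu_cls_def repr_def ..

lemma vstring_repr: "c \<in> NT \<Longrightarrow> vstring (repr c)"
proof -
  assume "c \<in> NT"
  then obtain a where "vstring a" "c = cls a" unfolding NT_def by blast
  then have "\<exists>w. w \<in> c \<and> vstring w" using cls_mem by blast
  then show ?thesis unfolding repr_def using someI_ex by (metis (mono_tags, lifting))
qed

definition sub_classes :: "vword \<Rightarrow> vword set set" where
  "sub_classes w = (\<lambda>e. cls (sub1 w e)) ` arr w \<union> (\<lambda>e. cls (sub2 w e)) ` arr w"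

lemma finite_sub_classes: "finite (sub_classes w)" unfolding sub_classes_def using finite_arr by simp

lemma nu_last_nu_last_A0:
  assumes x: "x \<in> (A0 :: ('r::comm_ring_1) tensor set)"
  shows "nu_last (nu_last x) [p, q, r] = (\<Sum>c'\<in>supp1 x. x [c'] * nu_nu_coeff (repr c') p q r)"
proof -
  let ?y = "nu_last x"
  have fS: "finite (supp1 x)" using finite_supp1[OF x] .
  have y: "?y ys = (\<Sum>c'\<in>supp1 x. x [c'] * nu_gen (repr c') ys)" for ys
    using nu_last_A0_sum[OF x fS] unfolding nu_cls_repr by simp
  define D where "D = (\<Union>c'\<in>supp1 x. sub_classes (repr c'))"
  have fD: "finite D" unfolding D_def using fS finite_sub_classes by blast
  have DD: "cls (sub1 (repr c') e) \<in> D \<and> cls (sub2 (repr c') e) \<in> D" if "c' \<in> supp1 x"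
    "e \<in> arr (repr c')" for c' e
    using that unfolding D_def sub_classes_def by blast
  have sub: "{d. ?y [p, d] \<noteq> 0} \<subseteq> D"
  proof
    fix d assume "d \<in> {d. ?y [p, d] \<noteq> 0}"
    then have "(\<Sum>c'\<in>supp1 x. x [c'] * nu_gen (repr c') [p, d]) \<noteq> 0" using y by simp
    then obtain c' where c': "c' \<in> supp1 x" "x [c'] * nu_gen (repr c') [p, d] \<noteq> (0::'r)"
      by (rule sum.not_neutral_contains_not_neutral) blast
    have "nu_gen (repr c') [p, d] \<noteq> (0::'r)"
    proof
      assume "nu_gen (repr c') [p, d] = (0::'r)" then show False using c'(2) by simp
    qed
    from nu_gen_support[OF vstring_repr[OF supp1_NT[OF x c'(1)]] this] obtain e where
      "e \<in> arr (repr c')"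
      "[p, d] = [cls (sub1 (repr c') e), cls (sub2 (repr c') e)] \<or> [p, d] = [cls (sub2 (repr c') e),
        cls (sub1 (repr c') e)]"
      by blast
    then show "d \<in> D" using DD[OF c'(1)] by auto
  qed
  have "nu_last ?y [p, q, r] = (\<Sum>d\<in>{d. ?y [p, d] \<noteq> 0}. ?y [p, d] * nu_cls d [q, r])"
    unfolding nu_last_def by simp
  also have "\<dots> = (\<Sum>d\<in>D. ?y [p, d] * nu_cls d [q, r])"
    by (rule sum.mono_neutral_left[OF fD sub]) auto
  also have "\<dots> = (\<Sum>d\<in>D. \<Sum>c'\<in>supp1 x. x [c'] * (nu_gen (repr c') [p, d] * nu_cls d [q, r]))"
    unfolding y by (simp add: sum_distrib_right mult.assoc)
  also have "\<dots> = (\<Sum>c'\<in>supp1 x. x [c'] * (\<Sum>d\<in>D. nu_gen (repr c') [p, d] * nu_cls d [q, r]))"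
    by (subst sum.swap) (simp add: sum_distrib_left)
  also have "\<dots> = (\<Sum>c'\<in>supp1 x. x [c'] * nu_nu_coeff (repr c') p q r)"
  proof (rule sum.cong)
    fix c' assume c': "c' \<in> supp1 x"
    show "x [c'] * (\<Sum>d\<in>D. nu_gen (repr c') [p, d] * nu_cls d [q, r]) = x [c'] * nu_nu_coeff (repr c') p q r"
      using sum_nu_gen_nu_cls[OF vstring_repr[OF supp1_NT[OF x c']] fD DD[OF c'], where 'r='r] by simp
  qed simp
  finally show ?thesis .
qed

lemma nu_last_co_Jacobi:
  assumes x: "x \<in> (A0 :: ('r::comm_ring_1) tensor set)"
  shows "nu_last (nu_last x) [a, b, c] + nu_last (nu_last x) [b, c, a] + nu_last (nu_last x) [c, a, b] = 0"
proof -
  have "nu_last (nu_last x) [a, b, c] + nu_last (nu_last x) [b, c, a] + nu_last (nu_last x) [c, a, b] =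
      (\<Sum>c'\<in>supp1 x. x [c'] *
        (nu_nu_coeff (repr c') a b c + nu_nu_coeff (repr c') b c a + nu_nu_coeff (repr c') c a b))"
    unfolding nu_last_nu_last_A0[OF x] by (simp add: sum.distrib distrib_left)
  also have "\<dots> = 0"
    using nu_nu_coeff_cyclic_sum[OF vstring_repr[OF supp1_NT[OF x]], where 'r='r] by simp
  finally show ?thesis .
qed

theorem lemma9p1:
  shows
    \<comment> \<open>well-definedness: the formula only depends on the homotopy class\<close>
    "(\<forall>\<alpha> \<beta>. vstring \<alpha> \<and> vstring \<beta> \<and> \<not> htrivial \<alpha> \<and> homotopic \<alpha> \<beta> \<longrightarrow>
        (nu_gen \<alpha> :: ('r::comm_ring_1) tensor) = nu_gen \<beta>)
   \<and> \<comment> \<open>nu is given on generators by the formula\<close>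
     (\<forall>\<alpha>. vstring \<alpha> \<and> \<not> htrivial \<alpha> \<longrightarrow> nu_last (gen \<alpha> :: 'r tensor) = nu_gen \<alpha>)
   \<and> \<comment> \<open>nu is an R-linear map A_0 \<rightarrow> A_0 \<otimes> A_0\<close>
     (\<forall>x \<in> (A0 :: 'r tensor set). nu_last x \<in> tensor_space 2)
   \<and> (\<forall>x \<in> (A0 :: 'r tensor set). \<forall>y \<in> A0. nu_last (\<lambda>ys. x ys + y ys) = (\<lambda>ys. nu_last x ys + nu_last y ys))
   \<and> (\<forall>x \<in> (A0 :: 'r tensor set). \<forall>a. nu_last (\<lambda>ys. a * x ys) = (\<lambda>ys. a * nu_last x ys))
   \<and> \<comment> \<open>antisymmetry  P \<circ> nu = - nu\<close>
     (\<forall>x \<in> (A0 :: 'r tensor set). \<forall>a b. nu_last x [b, a] = - nu_last x [a, b])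
   \<and> \<comment> \<open>co-Jacobi identity  (id + \<tau> + \<tau>^2) \<circ> (id \<otimes> nu) \<circ> nu = 0\<close>
     (\<forall>x \<in> (A0 :: 'r tensor set). \<forall>a b c.
        nu_last (nu_last x) [a, b, c] + nu_last (nu_last x) [b, c, a]
          + nu_last (nu_last x) [c, a, b] = 0)
   \<and> \<comment> \<open>spiral: A_0 is free (by construction) and A_0 is the union of the ker nu^(n)\<close>
     (\<forall>x \<in> (A0 :: 'r tensor set). \<exists>n\<ge>1. nu_pow n x = (\<lambda>_. 0))"
  using nu_gen_homotopic nu_last_gen nu_last_tensor_space nu_last_add nu_last_smult
    nu_last_antisym nu_last_co_Jacobi nu_pow_vanishes
  by (intro conjI) blast+


end
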